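(* Let $k$ be a commutative ring and $H$ a $k$-bialgebra which is finitely generated projective as a $k$-module. Then $H$ is an FH-algebra if and only if the dual $H^*=\mathrm{Hom}_k(H,k)$ is an FH-algebra.
   Context: An FH-algebra over $k$ is a $k$-bialgebra $H$ which is a Frobenius algebra ($H$ finitely generated projective over $k$, with $f\in\mathrm{Hom}_k(H,k)$ and finitely many $x_i,y_i\in H$ such that $\sum_ix_if(y_ia)=a=\sum_if(ax_i)y_i$ for all $a$) whose Frobenius homomorphism $f$ can be chosen to be a right integral in $H^*$, i.e. $\sum f(a_1)a_2=f(a)1$ for all $a\in H$. $H^*$ is a bialgebra with convolution product $(gh)(x)=\sum g(x_1)h(x_2)$ and coproduct dual to the multiplication of $H$; $H^{**}$ is identified with $H$. *)

theory Defs
  imports Main "HOL-Library.Function_Algebras"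
begin

text \<open>
  Modules are represented by a carrier set S inside an abelian group type 'a together
  with a scalar multiplication sc over a commutative ring 'k.  Elements of the n-fold
  tensor power of S are represented by lists of simple tensors (each simple tensor is a
  list of n factors; coefficients are absorbed into the factors), and equality in the
  tensor power is the genuine one: the formal difference lies in the submodule of the free
  k-module on n-tuples generated by the multilinearity relations.
\<close>

definition module_on :: "('k::comm_ring_1 \<Rightarrow> 'a::ab_group_add \<Rightarrow> 'a) \<Rightarrow> 'a set \<Rightarrow> bool" where
  "module_on sc S \<longleftrightarrow> 0 \<in> S \<and> (\<forall>x\<in>S. \<forall>y\<in>S. x + y \<in> S) \<and> (\<forall>x\<in>S. - x \<in> S)
     \<and> (\<forall>r. \<forall>x\<in>S. sc r x \<in> S)
     \<and> (\<forall>r. \<forall>x\<in>S. \<forall>y\<in>S. sc r (x + y) = sc r x + sc r y)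
     \<and> (\<forall>r s. \<forall>x\<in>S. sc (r + s) x = sc r x + sc s x)
     \<and> (\<forall>r s. \<forall>x\<in>S. sc r (sc s x) = sc (r * s) x)
     \<and> (\<forall>x\<in>S. sc 1 x = x)"

definition lin_on :: "('k::comm_ring_1 \<Rightarrow> 'a::ab_group_add \<Rightarrow> 'a) \<Rightarrow> 'a set
    \<Rightarrow> ('k \<Rightarrow> 'b::ab_group_add \<Rightarrow> 'b) \<Rightarrow> ('a \<Rightarrow> 'b) \<Rightarrow> bool" where
  "lin_on sa S sb f \<longleftrightarrow> (\<forall>x\<in>S. \<forall>y\<in>S. f (x + y) = f x + f y) \<and> (\<forall>r. \<forall>x\<in>S. f (sa r x) = sb r (f x))"

definition kn :: "nat \<Rightarrow> (nat \<Rightarrow> 'k::comm_ring_1) set" where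
  "kn n = {v. \<forall>j\<ge>n. v j = 0}"

definition kn_scale :: "'k::comm_ring_1 \<Rightarrow> (nat \<Rightarrow> 'k) \<Rightarrow> (nat \<Rightarrow> 'k)" where
  "kn_scale r v = (\<lambda>j. r * v j)"

text \<open>Finitely generated projective: a direct summand of a finite free module k^n.\<close>
definition fin_gen_proj :: "('k::comm_ring_1 \<Rightarrow> 'a::ab_group_add \<Rightarrow> 'a) \<Rightarrow> 'a set \<Rightarrow> bool" where
  "fin_gen_proj sc S \<longleftrightarrow> (\<exists>n (p :: (nat \<Rightarrow> 'k) \<Rightarrow> 'a) i.
      lin_on kn_scale (kn n) sc p \<and> p ` kn n \<subseteq> S \<and>
      lin_on sc S kn_scale i \<and> i ` S \<subseteq> kn n \<and> (\<forall>a\<in>S. p (i a) = a))"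

definition delta :: "'a list \<Rightarrow> 'a list \<Rightarrow> 'k::comm_ring_1" where
  "delta w = (\<lambda>v. if v = w then 1 else 0)"

inductive_set tensor_rel :: "('k::comm_ring_1 \<Rightarrow> 'a::ab_group_add \<Rightarrow> 'a) \<Rightarrow> 'a set \<Rightarrow> nat
    \<Rightarrow> ('a list \<Rightarrow> 'k) set" for sc S n where
  zero: "(\<lambda>v. 0) \<in> tensor_rel sc S n"
| add: "p \<in> tensor_rel sc S n \<Longrightarrow> q \<in> tensor_rel sc S n \<Longrightarrow> (\<lambda>v. p v + q v) \<in> tensor_rel sc S n"
| smult: "p \<in> tensor_rel sc S n \<Longrightarrow> (\<lambda>v. r * p v) \<in> tensor_rel sc S n"
| additive: "length us + Suc (length vs) = n \<Longrightarrow> set us \<subseteq> S \<Longrightarrow> set vs \<subseteq> S \<Longrightarrow> x \<in> S \<Longrightarrow> y \<in> S \<Longrightarrow>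
     (\<lambda>v. delta (us @ (x + y) # vs) v - delta (us @ x # vs) v - delta (us @ y # vs) v) \<in> tensor_rel sc S n"
| homog: "length us + Suc (length vs) = n \<Longrightarrow> set us \<subseteq> S \<Longrightarrow> set vs \<subseteq> S \<Longrightarrow> x \<in> S \<Longrightarrow>
     (\<lambda>v. delta (us @ sc r x # vs) v - r * delta (us @ x # vs) v) \<in> tensor_rel sc S n"

definition tensor_eq :: "('k::comm_ring_1 \<Rightarrow> 'a::ab_group_add \<Rightarrow> 'a) \<Rightarrow> 'a set \<Rightarrow> nat
    \<Rightarrow> 'a list list \<Rightarrow> 'a list list \<Rightarrow> bool" where
  "tensor_eq sc S n xs ys \<longleftrightarrow> (\<forall>w \<in> set xs \<union> set ys. length w = n \<and> set w \<subseteq> S) \<and>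
     (\<lambda>v. (of_nat (count_list xs v) :: 'k) - of_nat (count_list ys v)) \<in> tensor_rel sc S n"

definition tens2 :: "('a \<times> 'a) list \<Rightarrow> 'a list list" where
  "tens2 L = map (\<lambda>(x, y). [x, y]) L"

definition bialgebra :: "('k::comm_ring_1 \<Rightarrow> 'a::ab_group_add \<Rightarrow> 'a) \<Rightarrow> 'a set
    \<Rightarrow> ('a \<Rightarrow> 'a \<Rightarrow> 'a) \<Rightarrow> 'a \<Rightarrow> ('a \<Rightarrow> ('a \<times> 'a) list) \<Rightarrow> ('a \<Rightarrow> 'k) \<Rightarrow> bool" where
  "bialgebra sc S mult one comult counit \<longleftrightarrow>
     module_on sc S \<and>
     \<comment> \<open>algebra\<close>
     (\<forall>a\<in>S. \<forall>b\<in>S. mult a b \<in> S) \<and> one \<in> S \<and>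
     (\<forall>a\<in>S. lin_on sc S sc (mult a)) \<and> (\<forall>b\<in>S. lin_on sc S sc (\<lambda>a. mult a b)) \<and>
     (\<forall>a\<in>S. \<forall>b\<in>S. \<forall>c\<in>S. mult (mult a b) c = mult a (mult b c)) \<and>
     (\<forall>a\<in>S. mult one a = a \<and> mult a one = a) \<and>
     \<comment> \<open>coalgebra\<close>
     (\<forall>a\<in>S. \<forall>(x, y) \<in> set (comult a). x \<in> S \<and> y \<in> S) \<and>
     (\<forall>a\<in>S. \<forall>b\<in>S. tensor_eq sc S 2 (tens2 (comult (a + b))) (tens2 (comult a @ comult b))) \<and>
     (\<forall>r. \<forall>a\<in>S. tensor_eq sc S 2 (tens2 (comult (sc r a)))
                   (map (\<lambda>(x, y). [sc r x, y]) (comult a))) \<and>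
     (\<forall>a\<in>S. tensor_eq sc S 3
        (concat (map (\<lambda>(a1, a2). map (\<lambda>(b1, b2). [b1, b2, a2]) (comult a1)) (comult a)))
        (concat (map (\<lambda>(a1, a2). map (\<lambda>(c1, c2). [a1, c1, c2]) (comult a2)) (comult a)))) \<and>
     lin_on sc S (\<lambda>r s. r * s) counit \<and>
     (\<forall>a\<in>S. sum_list (map (\<lambda>(x, y). sc (counit x) y) (comult a)) = a) \<and>
     (\<forall>a\<in>S. sum_list (map (\<lambda>(x, y). sc (counit y) x) (comult a)) = a) \<and>
     \<comment> \<open>compatibility: comult and counit are algebra maps\<close>
     (\<forall>a\<in>S. \<forall>b\<in>S. tensor_eq sc S 2 (tens2 (comult (mult a b)))
        (concat (map (\<lambda>(a1, a2). map (\<lambda>(b1, b2). [mult a1 b1, mult a2 b2]) (comult b)) (comult a)))) \<and>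
     tensor_eq sc S 2 (tens2 (comult one)) [[one, one]] \<and>
     (\<forall>a\<in>S. \<forall>b\<in>S. counit (mult a b) = counit a * counit b) \<and> counit one = 1"

text \<open>Frobenius algebra whose Frobenius homomorphism f is a right integral in the dual.\<close>
definition FH_algebra :: "('k::comm_ring_1 \<Rightarrow> 'a::ab_group_add \<Rightarrow> 'a) \<Rightarrow> 'a set
    \<Rightarrow> ('a \<Rightarrow> 'a \<Rightarrow> 'a) \<Rightarrow> 'a \<Rightarrow> ('a \<Rightarrow> ('a \<times> 'a) list) \<Rightarrow> ('a \<Rightarrow> 'k) \<Rightarrow> bool" where
  "FH_algebra sc S mult one comult counit \<longleftrightarrow>
     bialgebra sc S mult one comult counit \<and> fin_gen_proj sc S \<and>
     (\<exists>(f :: 'a \<Rightarrow> 'k) (xys :: ('a \<times> 'a) list).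
        lin_on sc S (\<lambda>r s. r * s) f \<and> (\<forall>(x, y) \<in> set xys. x \<in> S \<and> y \<in> S) \<and>
        (\<forall>a\<in>S. sum_list (map (\<lambda>(x, y). sc (f (mult y a)) x) xys) = a) \<and>
        (\<forall>a\<in>S. sum_list (map (\<lambda>(x, y). sc (f (mult a x)) y) xys) = a) \<and>
        (\<forall>a\<in>S. sum_list (map (\<lambda>(a1, a2). sc (f a1) a2) (comult a)) = sc (f a) one))"

definition dual_scale :: "'k::comm_ring_1 \<Rightarrow> ('a \<Rightarrow> 'k) \<Rightarrow> ('a \<Rightarrow> 'k)" where
  "dual_scale r g = (\<lambda>x. r * g x)"

definition dual_carrier :: "('k::comm_ring_1 \<Rightarrow> 'a::ab_group_add \<Rightarrow> 'a) \<Rightarrow> 'a set \<Rightarrow> ('a \<Rightarrow> 'k) set" where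
  "dual_carrier sc S = {g. lin_on sc S (\<lambda>r s. r * s) g \<and> (\<forall>x. x \<notin> S \<longrightarrow> g x = 0)}"

definition dual_mult :: "'a set \<Rightarrow> ('a \<Rightarrow> ('a \<times> 'a) list) \<Rightarrow> ('a \<Rightarrow> 'k::comm_ring_1) \<Rightarrow> ('a \<Rightarrow> 'k) \<Rightarrow> ('a \<Rightarrow> 'k)" where
  "dual_mult S comult g h = (\<lambda>x. if x \<in> S then sum_list (map (\<lambda>(x1, x2). g x1 * h x2) (comult x)) else 0)"

definition dual_one :: "'a set \<Rightarrow> ('a \<Rightarrow> 'k::comm_ring_1) \<Rightarrow> ('a \<Rightarrow> 'k)" where
  "dual_one S counit = (\<lambda>x. if x \<in> S then counit x else 0)"

text \<open>Coproduct of H* dual to the multiplication of H: a representative in H* (x) H* of the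
  functional (a (x) b) |-> g(ab) (unique in H* (x) H* = (H (x) H)* since H is f.g. projective).\<close>
definition dual_comult :: "('k::comm_ring_1 \<Rightarrow> 'a::ab_group_add \<Rightarrow> 'a) \<Rightarrow> 'a set \<Rightarrow> ('a \<Rightarrow> 'a \<Rightarrow> 'a)
    \<Rightarrow> ('a \<Rightarrow> 'k) \<Rightarrow> (('a \<Rightarrow> 'k) \<times> ('a \<Rightarrow> 'k)) list" where
  "dual_comult sc S mult g = (SOME L. (\<forall>(u, v) \<in> set L. u \<in> dual_carrier sc S \<and> v \<in> dual_carrier sc S) \<and>
      (\<forall>a\<in>S. \<forall>b\<in>S. sum_list (map (\<lambda>(u, v). u a * v b) L) = g (mult a b)))"

definition dual_counit :: "'a \<Rightarrow> ('a \<Rightarrow> 'k) \<Rightarrow> 'k" where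
  "dual_counit one g = g one"

end

theory Submission
  imports Defs
begin

text \<open>
  If f is a Frobenius homomorphism of H that is a right integral in H*, with Frobenius pairs
  (x_i, y_i), then t = \<Sum> \<epsilon>(x_i) y_i and t' = \<Sum> \<epsilon>(y_i) x_i are a right and a left integral
  in H with f(t b) = \<epsilon>(b) = f(b t').  The maps S c = \<Sum> f(t_1 c) t_2 and S' c = \<Sum> f(c t'_1) t'_2
  are mutually inverse (S is an antipode, and S' S = id follows from coassociativity; S S' = id is
  the same statement for the opposite algebra).  Then evaluation at t is a Frobenius homomorphism
  of H* and a right integral in H**, the Frobenius pairs being (\<mu>_j, f(- S' m_j)) for a dual basis
  (\<mu>_j, m_j) of H.

  Conversely, if H* is FH, its Frobenius homomorphism is evaluation at some element of H, and the
  right integral T of H* constructed as above is a Frobenius homomorphism of H: the antipodes of H*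
  show that a \<mapsto> T(a -) is a bijection H \<rightarrow> H*, and transporting the dual basis along it gives
  Frobenius pairs for T.
\<close>

lemma sum_list_map_swap:
  fixes F :: "'a \<Rightarrow> 'b \<Rightarrow> 'c::comm_monoid_add"
  shows "(\<Sum>x\<leftarrow>xs. \<Sum>y\<leftarrow>ys. F x y) = (\<Sum>y\<leftarrow>ys. \<Sum>x\<leftarrow>xs. F x y)"
  by (induction xs) (simp_all add: sum_list_addf)

lemma sum_list_map_swap4:
  fixes F :: "'p \<Rightarrow> 'q \<Rightarrow> 'r \<Rightarrow> 's \<Rightarrow> 'z::comm_monoid_add"
  shows "(\<Sum>p\<leftarrow>P. \<Sum>q\<leftarrow>Q. \<Sum>r\<leftarrow>R. \<Sum>s\<leftarrow>T. F p q r s) = (\<Sum>r\<leftarrow>R. \<Sum>s\<leftarrow>T. \<Sum>p\<leftarrow>P. \<Sum>q\<leftarrow>Q. F p q r s)"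
  by (simp only: sum_list_map_swap[where xs=Q and ys=R] sum_list_map_swap[where xs=Q and ys=T]
      sum_list_map_swap[where xs=P and ys=R] sum_list_map_swap[where xs=P and ys=T])

lemma sum_list_concat_map:
  fixes f :: "'b \<Rightarrow> 'c::monoid_add"
  shows "sum_list (map f (concat (map g xs))) = (\<Sum>x\<leftarrow>xs. sum_list (map f (g x)))"
  by (induction xs) simp_all

lemma sum_list_map_apply:
  fixes F :: "'p \<Rightarrow> 'x \<Rightarrow> 'y::comm_monoid_add"
  shows "(\<Sum>p\<leftarrow>L. F p) x = (\<Sum>p\<leftarrow>L. F p x)"
  by (induction L) simp_all

lemma sum_list_map_cong:
  "(\<And>x. x \<in> set xs \<Longrightarrow> f x = g x) \<Longrightarrow> sum_list (map f xs) = sum_list (map g xs)"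
  by (metis map_eq_conv)

lemma sum_list_map_pairs:
  "(\<Sum>(\<phi>, b)\<leftarrow>map (\<lambda>(\<mu>, m). (F \<mu> m, G \<mu> m)) L. H \<phi> b) = (\<Sum>(\<mu>, m)\<leftarrow>L. H (F \<mu> m) (G \<mu> m))"
  by (induction L) auto

lemma sum_list_map_nth:
  "(\<Sum>j\<leftarrow>[0..<length xs]. F (xs ! j)) = (\<Sum>p\<leftarrow>xs. F p)"
proof -
  have "map (\<lambda>j. F (xs ! j)) [0..<length xs] = map F (map ((!) xs) [0..<length xs])" by simp
  also have "\<dots> = map F xs" by (simp add: map_nth)
  finally show ?thesis by simp
qed

lemma list_length2_eq: "length w = 2 \<Longrightarrow> w = [w ! 0, w ! Suc 0]"
  by (cases w; cases "tl w") (auto simp: numeral_2_eq_2)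

lemma list_length3_eq: "length w = 3 \<Longrightarrow> w = [w ! 0, w ! Suc 0, w ! Suc (Suc 0)]"
  by (cases w; cases "tl w"; cases "tl (tl w)") (auto simp: numeral_3_eq_3)

section \<open>Evaluating tensor equalities on multilinear forms\<close>

definition multilinear_on :: "('k::comm_ring_1 \<Rightarrow> 'a::ab_group_add \<Rightarrow> 'a) \<Rightarrow> 'a set \<Rightarrow> nat \<Rightarrow> ('a list \<Rightarrow> 'k) \<Rightarrow> bool" where
  "multilinear_on sc S n \<phi> \<longleftrightarrow>
    (\<forall>us vs x y. length us + Suc (length vs) = n \<longrightarrow> set us \<subseteq> S \<longrightarrow> set vs \<subseteq> S \<longrightarrow> x \<in> S \<longrightarrow> y \<in> S \<longrightarrow>
        \<phi> (us @ (x + y) # vs) = \<phi> (us @ x # vs) + \<phi> (us @ y # vs)) \<and>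
    (\<forall>us vs x r. length us + Suc (length vs) = n \<longrightarrow> set us \<subseteq> S \<longrightarrow> set vs \<subseteq> S \<longrightarrow> x \<in> S \<longrightarrow>
        \<phi> (us @ sc r x # vs) = r * \<phi> (us @ x # vs))"

lemma sum_delta_mult:
  fixes \<phi> :: "'a list \<Rightarrow> 'k::comm_ring_1"
  assumes "finite G" "w \<in> G"
  shows "(\<Sum>v\<in>G. delta w v * \<phi> v) = \<phi> w"
proof -
  have "(\<Sum>v\<in>G. delta w v * \<phi> v) = (\<Sum>v\<in>G. if v = w then \<phi> v else 0)"
    by (rule sum.cong) (auto simp: delta_def)
  also have "\<dots> = \<phi> w" using assms by (simp add: sum.delta')
  finally show ?thesis .
qed

text \<open>Elements of tensor_rel are not known to have finite support, so their pairing with a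
  multilinear form is taken over all large enough finite sets of tuples.\<close>

lemma tensor_rel_pairing_zero:
  fixes \<phi> :: "'a::ab_group_add list \<Rightarrow> 'k::comm_ring_1"
  assumes "p \<in> tensor_rel sc S n" "multilinear_on sc S n \<phi>"
  shows "\<exists>F. finite F \<and> (\<forall>G. finite G \<longrightarrow> F \<subseteq> G \<longrightarrow> (\<Sum>v\<in>G. p v * \<phi> v) = 0)"
  using assms(1)
proof (induction rule: tensor_rel.induct)
  case zero
  then show ?case by auto
next
  case (add p q)
  then obtain F1 F2 where "finite F1" "\<forall>G. finite G \<longrightarrow> F1 \<subseteq> G \<longrightarrow> (\<Sum>v\<in>G. p v * \<phi> v) = 0"
    "finite F2" "\<forall>G. finite G \<longrightarrow> F2 \<subseteq> G \<longrightarrow> (\<Sum>v\<in>G. q v * \<phi> v) = 0" by blast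
  then show ?case
    by (intro exI[of _ "F1 \<union> F2"]) (auto simp: distrib_right sum.distrib)
next
  case (smult p r)
  then obtain F1 where "finite F1" "\<forall>G. finite G \<longrightarrow> F1 \<subseteq> G \<longrightarrow> (\<Sum>v\<in>G. p v * \<phi> v) = 0" by blast
  then show ?case
    by (intro exI[of _ F1]) (auto simp: mult.assoc sum_distrib_left[symmetric])
next
  case (additive us vs x y)
  let ?A = "us @ (x + y) # vs" and ?B = "us @ x # vs" and ?C = "us @ y # vs"
  show ?case
  proof (intro exI[of _ "{?A, ?B, ?C}"] conjI allI impI)
    fix G :: "'a list set" assume G: "finite G" "{?A, ?B, ?C} \<subseteq> G"
    have "(\<Sum>v\<in>G. (delta ?A v - delta ?B v - delta ?C v) * \<phi> v)
        = (\<Sum>v\<in>G. delta ?A v * \<phi> v) - (\<Sum>v\<in>G. delta ?B v * \<phi> v) - (\<Sum>v\<in>G. delta ?C v * \<phi> v)"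
      by (simp add: left_diff_distrib sum_subtractf)
    also have "\<dots> = \<phi> ?A - \<phi> ?B - \<phi> ?C" using G by (simp add: sum_delta_mult)
    also have "\<dots> = 0" using assms(2) additive by (simp add: multilinear_on_def)
    finally show "(\<Sum>v\<in>G. (delta ?A v - delta ?B v - delta ?C v) * \<phi> v) = 0" .
  qed simp
next
  case (homog us vs x r)
  let ?A = "us @ sc r x # vs" and ?B = "us @ x # vs"
  show ?case
  proof (intro exI[of _ "{?A, ?B}"] conjI allI impI)
    fix G :: "'a list set" assume G: "finite G" "{?A, ?B} \<subseteq> G"
    have "(\<Sum>v\<in>G. (delta ?A v - r * delta ?B v) * \<phi> v)
        = (\<Sum>v\<in>G. delta ?A v * \<phi> v) - r * (\<Sum>v\<in>G. delta ?B v * \<phi> v)"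
      by (simp add: left_diff_distrib sum_subtractf sum_distrib_left mult.assoc)
    also have "\<dots> = \<phi> ?A - r * \<phi> ?B" using G by (simp add: sum_delta_mult)
    also have "\<dots> = 0" using assms(2) homog by (simp add: multilinear_on_def)
    finally show "(\<Sum>v\<in>G. (delta ?A v - r * delta ?B v) * \<phi> v) = 0" .
  qed simp
qed

lemma sum_count_list_mult:
  fixes \<phi> :: "'a \<Rightarrow> 'k::comm_ring_1"
  assumes "finite G" "set xs \<subseteq> G"
  shows "(\<Sum>v\<in>G. of_nat (count_list xs v) * \<phi> v) = sum_list (map \<phi> xs)"
  using assms(2)
proof (induction xs)
  case Nil
  then show ?case by simp
next
  case (Cons x xs)
  have "(\<Sum>v\<in>G. of_nat (count_list (x # xs) v) * \<phi> v)
      = (\<Sum>v\<in>G. (if v = x then \<phi> v else 0) + of_nat (count_list xs v) * \<phi> v)"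
    by (rule sum.cong) (auto simp: distrib_right)
  also have "\<dots> = \<phi> x + sum_list (map \<phi> xs)"
    using Cons assms(1) by (simp add: sum.distrib sum.delta')
  finally show ?case by simp
qed

lemma tensor_eq_multilinear_eval:
  fixes \<phi> :: "'a::ab_group_add list \<Rightarrow> 'k::comm_ring_1"
  assumes "tensor_eq sc S n xs ys" "multilinear_on sc S n \<phi>"
  shows "sum_list (map \<phi> xs) = sum_list (map \<phi> ys)"
proof -
  let ?p = "\<lambda>v. (of_nat (count_list xs v) :: 'k) - of_nat (count_list ys v)"
  have "?p \<in> tensor_rel sc S n" using assms(1) by (simp add: tensor_eq_def)
  from tensor_rel_pairing_zero[OF this assms(2)] obtain F where F: "finite F"
    "\<forall>G. finite G \<longrightarrow> F \<subseteq> G \<longrightarrow> (\<Sum>v\<in>G. ?p v * \<phi> v) = 0" by blast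
  let ?G = "F \<union> set xs \<union> set ys"
  have "(\<Sum>v\<in>?G. ?p v * \<phi> v) = 0" by (rule F(2)[rule_format]) (use F(1) in auto)
  then have "0 = (\<Sum>v\<in>?G. ?p v * \<phi> v)" by simp
  also have "\<dots> = (\<Sum>v\<in>?G. of_nat (count_list xs v) * \<phi> v) - (\<Sum>v\<in>?G. of_nat (count_list ys v) * \<phi> v)"
    by (simp add: left_diff_distrib sum_subtractf)
  also have "\<dots> = sum_list (map \<phi> xs) - sum_list (map \<phi> ys)"
  proof -
    have "(\<Sum>v\<in>?G. of_nat (count_list xs v) * \<phi> v) = sum_list (map \<phi> xs)"
      by (rule sum_count_list_mult) (use F(1) in auto)
    moreover have "(\<Sum>v\<in>?G. of_nat (count_list ys v) * \<phi> v) = sum_list (map \<phi> ys)"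
      by (rule sum_count_list_mult) (use F(1) in auto)
    ultimately show ?thesis by simp
  qed
  finally show ?thesis by simp
qed

abbreviation lin_functional :: "('k::comm_ring_1 \<Rightarrow> 'a::ab_group_add \<Rightarrow> 'a) \<Rightarrow> 'a set \<Rightarrow> ('a \<Rightarrow> 'k) \<Rightarrow> bool" where
  "lin_functional sc S g \<equiv> lin_on sc S (\<lambda>r s. r * s) g"

lemma lin_onD_add: "lin_on sa S sb F \<Longrightarrow> x \<in> S \<Longrightarrow> y \<in> S \<Longrightarrow> F (x + y) = F x + F y"
  by (simp add: lin_on_def)

lemma lin_onD_scale: "lin_on sa S sb F \<Longrightarrow> x \<in> S \<Longrightarrow> F (sa r x) = sb r (F x)"
  by (simp add: lin_on_def)

lemma lin_on_zero: "lin_on sa S sb F \<Longrightarrow> 0 \<in> S \<Longrightarrow> F 0 = 0"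
  using lin_onD_add[of sa S sb F 0 0] by simp

lemma lin_on_compose:
  "lin_on sc S sc F \<Longrightarrow> (\<And>x. x \<in> S \<Longrightarrow> F x \<in> S) \<Longrightarrow> lin_on sc S sb G \<Longrightarrow> lin_on sc S sb (\<lambda>x. G (F x))"
  by (simp add: lin_on_def)

lemma lin_functional_mult_const:
  "lin_functional sc S F \<Longrightarrow> lin_functional sc S (\<lambda>x. F x * (c::'k::comm_ring_1))"
  by (simp add: lin_on_def distrib_right)

lemma lin_functional_const_mult:
  "lin_functional sc S F \<Longrightarrow> lin_functional sc S (\<lambda>x. (c::'k::comm_ring_1) * F x)"
  by (simp add: lin_on_def distrib_left mult.left_commute)

locale carrier_module =
  fixes sc :: "'k::comm_ring_1 \<Rightarrow> 'a::ab_group_add \<Rightarrow> 'a" and S :: "'a set"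
  assumes module: "module_on sc S"
begin

lemma zero_in [simp]: "0 \<in> S"
  and add_in [simp]: "x \<in> S \<Longrightarrow> y \<in> S \<Longrightarrow> x + y \<in> S"
  and scale_in [simp]: "x \<in> S \<Longrightarrow> sc r x \<in> S"
  and scale_add_right: "x \<in> S \<Longrightarrow> y \<in> S \<Longrightarrow> sc r (x + y) = sc r x + sc r y"
  and scale_add_left: "x \<in> S \<Longrightarrow> sc (r + s) x = sc r x + sc s x"
  and scale_scale: "x \<in> S \<Longrightarrow> sc r (sc s x) = sc (r * s) x"
  and scale_one [simp]: "x \<in> S \<Longrightarrow> sc 1 x = x"
  using module by (simp_all add: module_on_def)

lemma scale_zero_right [simp]: "sc r 0 = 0"
  using scale_add_right[of 0 0 r] by simp

lemma sum_list_map_in [simp]: "(\<And>x. x \<in> set xs \<Longrightarrow> f x \<in> S) \<Longrightarrow> sum_list (map f xs) \<in> S"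
  by (induction xs) auto

lemma lin_on_scale: "lin_on sc S sc (sc r)"
  by (simp add: lin_on_def scale_add_right scale_scale mult.commute)

lemma lin_on_sum_list:
  assumes "lin_on sc S sb F" "\<And>p. p \<in> set L \<Longrightarrow> w p \<in> S"
  shows "F (\<Sum>p\<leftarrow>L. w p) = (\<Sum>p\<leftarrow>L. F (w p))"
  using assms(2)
proof (induction L)
  case Nil then show ?case using lin_on_zero[OF assms(1)] by simp
next
  case (Cons p L)
  then show ?case using lin_onD_add[OF assms(1)] by simp
qed

lemma lin_on_sum_list_scale:
  assumes "lin_on sc S sb F" "\<And>p. p \<in> set L \<Longrightarrow> w p \<in> S"
  shows "F (\<Sum>p\<leftarrow>L. sc (h p) (w p)) = (\<Sum>p\<leftarrow>L. sb (h p) (F (w p)))"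
proof -
  have "F (\<Sum>p\<leftarrow>L. sc (h p) (w p)) = (\<Sum>p\<leftarrow>L. F (sc (h p) (w p)))"
    using assms by (intro lin_on_sum_list) auto
  also have "\<dots> = (\<Sum>p\<leftarrow>L. sb (h p) (F (w p)))"
    using assms by (intro sum_list_map_cong) (simp add: lin_onD_scale)
  finally show ?thesis .
qed

end

definition bilinear_on :: "('k::comm_ring_1 \<Rightarrow> 'a::ab_group_add \<Rightarrow> 'a) \<Rightarrow> 'a set \<Rightarrow> ('a \<Rightarrow> 'a \<Rightarrow> 'k) \<Rightarrow> bool" where
  "bilinear_on sc S B \<longleftrightarrow> (\<forall>y\<in>S. lin_functional sc S (\<lambda>x. B x y)) \<and> (\<forall>x\<in>S. lin_functional sc S (B x))"

definition trilinear_on :: "('k::comm_ring_1 \<Rightarrow> 'a::ab_group_add \<Rightarrow> 'a) \<Rightarrow> 'a set \<Rightarrow> ('a \<Rightarrow> 'a \<Rightarrow> 'a \<Rightarrow> 'k) \<Rightarrow> bool" where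
  "trilinear_on sc S C \<longleftrightarrow> (\<forall>y\<in>S. \<forall>z\<in>S. lin_functional sc S (\<lambda>x. C x y z)) \<and>
     (\<forall>x\<in>S. \<forall>z\<in>S. lin_functional sc S (\<lambda>y. C x y z)) \<and> (\<forall>x\<in>S. \<forall>y\<in>S. lin_functional sc S (C x y))"

lemma bilinear_on_prod:
  "lin_functional sc S F \<Longrightarrow> lin_functional sc S G \<Longrightarrow> bilinear_on sc S (\<lambda>x y. F x * G y)"
  unfolding bilinear_on_def by (simp add: lin_functional_mult_const lin_functional_const_mult)

lemma trilinear_on_prod:
  "lin_functional sc S A \<Longrightarrow> lin_functional sc S B \<Longrightarrow> lin_functional sc S C \<Longrightarrow>
    trilinear_on sc S (\<lambda>p q r. A p * B q * (C r :: 'k::comm_ring_1))"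
  unfolding trilinear_on_def by (simp add: lin_functional_mult_const lin_functional_const_mult)

lemma bilinear_onD:
  assumes "bilinear_on sc S B" "x \<in> S" "y \<in> S" "z \<in> S"
  shows "B (x + y) z = B x z + B y z" "B z (x + y) = B z x + B z y"
    and "B (sc r x) z = r * B x z" "B z (sc r x) = r * B z x"
  using assms unfolding bilinear_on_def lin_on_def by blast+

lemma trilinear_onD:
  assumes "trilinear_on sc S C" "x \<in> S" "y \<in> S" "u \<in> S" "v \<in> S"
  shows "C (x + y) u v = C x u v + C y u v" "C u (x + y) v = C u x v + C u y v"
    "C u v (x + y) = C u v x + C u v y"
    and "C (sc r x) u v = r * C x u v" "C u (sc r x) v = r * C u x v" "C u v (sc r x) = r * C u v x"
  using assms unfolding trilinear_on_def lin_on_def by blast+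

lemma length_slot2_cases:
  assumes "length us + Suc (length vs) = 2"
  obtains v where "us = []" "vs = [v]" | u where "us = [u]" "vs = []"
  using assms by (cases us; cases vs) auto

lemma length_slot3_cases:
  assumes "length us + Suc (length vs) = 3"
  obtains v w where "us = []" "vs = [v, w]" | u w where "us = [u]" "vs = [w]" | u v where "us = [u, v]" "vs = []"
proof -
  consider "length us = 0" "length vs = 2" | "length us = 1" "length vs = 1" | "length us = 2" "length vs = 0"
    using assms by linarith
  then show ?thesis
    by cases (use that in \<open>auto simp: length_Suc_conv numeral_2_eq_2\<close>)
qed

lemma multilinear_on_bilinear:
  assumes "bilinear_on sc S B"
  shows "multilinear_on sc S 2 (\<lambda>w. B (w ! 0) (w ! Suc 0))"
  unfolding multilinear_on_def
proof (intro conjI allI impI)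
  fix us vs and x y
  assume "length us + Suc (length vs) = 2" "set us \<subseteq> S" "set vs \<subseteq> S" "x \<in> S" "y \<in> S"
  then show "B ((us @ (x + y) # vs) ! 0) ((us @ (x + y) # vs) ! Suc 0) =
       B ((us @ x # vs) ! 0) ((us @ x # vs) ! Suc 0) + B ((us @ y # vs) ! 0) ((us @ y # vs) ! Suc 0)"
    by (cases rule: length_slot2_cases) (simp_all add: bilinear_onD[OF assms])
next
  fix us vs and x r
  assume "length us + Suc (length vs) = 2" "set us \<subseteq> S" "set vs \<subseteq> S" "x \<in> S"
  then show "B ((us @ sc r x # vs) ! 0) ((us @ sc r x # vs) ! Suc 0) = r * B ((us @ x # vs) ! 0) ((us @ x # vs) ! Suc 0)"
    by (cases rule: length_slot2_cases) (simp_all add: bilinear_onD[OF assms])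
qed

lemma multilinear_on_trilinear:
  assumes "trilinear_on sc S C"
  shows "multilinear_on sc S 3 (\<lambda>w. C (w ! 0) (w ! Suc 0) (w ! Suc (Suc 0)))"
  unfolding multilinear_on_def
proof (intro conjI allI impI)
  fix us vs and x y
  assume "length us + Suc (length vs) = 3" "set us \<subseteq> S" "set vs \<subseteq> S" "x \<in> S" "y \<in> S"
  then show "C ((us @ (x + y) # vs) ! 0) ((us @ (x + y) # vs) ! Suc 0) ((us @ (x + y) # vs) ! Suc (Suc 0)) =
       C ((us @ x # vs) ! 0) ((us @ x # vs) ! Suc 0) ((us @ x # vs) ! Suc (Suc 0)) +
       C ((us @ y # vs) ! 0) ((us @ y # vs) ! Suc 0) ((us @ y # vs) ! Suc (Suc 0))"
    by (cases rule: length_slot3_cases) (simp_all add: trilinear_onD[OF assms])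
next
  fix us vs and x r
  assume "length us + Suc (length vs) = 3" "set us \<subseteq> S" "set vs \<subseteq> S" "x \<in> S"
  then show "C ((us @ sc r x # vs) ! 0) ((us @ sc r x # vs) ! Suc 0) ((us @ sc r x # vs) ! Suc (Suc 0)) =
       r * C ((us @ x # vs) ! 0) ((us @ x # vs) ! Suc 0) ((us @ x # vs) ! Suc (Suc 0))"
    by (cases rule: length_slot3_cases) (simp_all add: trilinear_onD[OF assms])
qed

lemma tensor_eq_bilinear_eval:
  assumes "tensor_eq sc S 2 xs ys" "bilinear_on sc S B"
  shows "(\<Sum>w\<leftarrow>xs. B (w ! 0) (w ! Suc 0)) = (\<Sum>w\<leftarrow>ys. B (w ! 0) (w ! Suc 0))"
  using tensor_eq_multilinear_eval[OF assms(1) multilinear_on_bilinear[OF assms(2)]] .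

lemma tensor_eq_trilinear_eval:
  assumes "tensor_eq sc S 3 xs ys" "trilinear_on sc S C"
  shows "(\<Sum>w\<leftarrow>xs. C (w ! 0) (w ! Suc 0) (w ! Suc (Suc 0))) = (\<Sum>w\<leftarrow>ys. C (w ! 0) (w ! Suc 0) (w ! Suc (Suc 0)))"
  using tensor_eq_multilinear_eval[OF assms(1) multilinear_on_trilinear[OF assms(2)]] .

lemma sum_list_tens2: "(\<Sum>w\<leftarrow>tens2 L. B (w ! 0) (w ! Suc 0)) = (\<Sum>(x, y)\<leftarrow>L. B x y)"
  by (induction L) (auto simp: tens2_def)

lemma tens2_append: "tens2 (xs @ ys) = tens2 xs @ tens2 ys"
  by (simp add: tens2_def)

context carrier_module
begin

lemma sum_pairs_in [simp]:
  "(\<And>x y. (x, y) \<in> set L \<Longrightarrow> w x y \<in> S) \<Longrightarrow> (\<Sum>(x, y)\<leftarrow>L. w x y) \<in> S"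
  by (rule sum_list_map_in) auto

lemma lin_on_sum_pairs_scale:
  assumes "lin_on sc S sb F" "\<And>x y. (x, y) \<in> set L \<Longrightarrow> w x y \<in> S"
  shows "F (\<Sum>(x, y)\<leftarrow>L. sc (h x y) (w x y)) = (\<Sum>(x, y)\<leftarrow>L. sb (h x y) (F (w x y)))"
  using lin_on_sum_list_scale[OF assms(1), of L "\<lambda>p. w (fst p) (snd p)" "\<lambda>p. h (fst p) (snd p)"] assms(2)
  by (simp add: split_def)

end

definition dual_basis_on :: "('k::comm_ring_1 \<Rightarrow> 'a::ab_group_add \<Rightarrow> 'a) \<Rightarrow> 'a set \<Rightarrow> (('a \<Rightarrow> 'k) \<times> 'a) list \<Rightarrow> bool" where
  "dual_basis_on sc S L \<longleftrightarrow> (\<forall>(\<mu>, m)\<in>set L. lin_functional sc S \<mu> \<and> m \<in> S) \<and>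
     (\<forall>x\<in>S. (\<Sum>(\<mu>, m)\<leftarrow>L. sc (\<mu> x) m) = x)"

lemma kn_sum_unit_vectors:
  fixes v :: "nat \<Rightarrow> 'k::comm_ring_1"
  assumes "v \<in> kn n"
  shows "(\<Sum>j\<leftarrow>[0..<n]. kn_scale (v j) (\<lambda>l. if l = j then 1 else 0)) = v"
proof
  fix l
  have "(\<Sum>j\<leftarrow>[0..<n]. kn_scale (v j) (\<lambda>l. if l = j then 1 else 0)) l = (\<Sum>j\<leftarrow>[0..<n]. if j = l then v j else 0)"
    unfolding sum_list_map_apply kn_scale_def by (rule sum_list_map_cong) simp
  also have "\<dots> = (\<Sum>j\<in>{0..<n}. if j = l then v j else 0)"
    by (simp add: sum_list_distinct_conv_sum_set)
  also have "\<dots> = v l" using assms by (auto simp: kn_def)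
  finally show "(\<Sum>j\<leftarrow>[0..<n]. kn_scale (v j) (\<lambda>l. if l = j then 1 else 0)) l = v l" .
qed

lemma fin_gen_proj_dual_basis:
  fixes sc :: "'k::comm_ring_1 \<Rightarrow> 'a::ab_group_add \<Rightarrow> 'a"
  assumes "module_on sc S" "fin_gen_proj sc S"
  shows "\<exists>L. dual_basis_on sc S L"
proof -
  obtain n p i where pi: "lin_on kn_scale (kn n) sc p" "p ` kn n \<subseteq> S"
      "lin_on sc S kn_scale i" "i ` S \<subseteq> kn n" "\<forall>a\<in>S. p (i a) = a"
    using assms(2) unfolding fin_gen_proj_def by (elim exE conjE) (rule that, assumption+)
  define e :: "nat \<Rightarrow> nat \<Rightarrow> 'k" where "e j = (\<lambda>l. if l = j then 1 else 0)" for j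
  have e_kn: "e j \<in> kn n" if "j < n" for j using that by (simp add: kn_def e_def)
  interpret kn: carrier_module kn_scale "kn n"
    by standard (auto simp: module_on_def kn_def kn_scale_def algebra_simps)
  show ?thesis
    unfolding dual_basis_on_def
  proof (intro exI[of _ "map (\<lambda>j. (\<lambda>x. i x j, p (e j))) [0..<n]"] conjI ballI)
    fix z assume "z \<in> set (map (\<lambda>j. (\<lambda>x. i x j, p (e j))) [0..<n])"
    then obtain j where "j < n" "z = (\<lambda>x. i x j, p (e j))" by auto
    moreover have "lin_functional sc S (\<lambda>x. i x j)"
      using pi(3) by (simp add: lin_on_def kn_scale_def)
    ultimately show "case z of (\<mu>, m) \<Rightarrow> lin_functional sc S \<mu> \<and> m \<in> S"
      using pi(2) e_kn by auto
  next
    fix x assume x: "x \<in> S"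
    then have "i x \<in> kn n" using pi(4) by auto
    have "x = p (i x)" using pi(5) x by simp
    also have "\<dots> = p (\<Sum>j\<leftarrow>[0..<n]. kn_scale (i x j) (e j))"
      using kn_sum_unit_vectors[OF \<open>i x \<in> kn n\<close>] by (simp add: e_def)
    also have "\<dots> = (\<Sum>j\<leftarrow>[0..<n]. sc (i x j) (p (e j)))"
      by (rule kn.lin_on_sum_list_scale[OF pi(1)]) (simp add: e_kn)
    finally show "(\<Sum>(\<mu>, m)\<leftarrow>map (\<lambda>j. (\<lambda>x. i x j, p (e j))) [0..<n]. sc (\<mu> x) m) = x"
      by (simp add: o_def)
  qed
qed

section \<open>Proving tensor equalities in coordinates\<close>

lemma tensor_rel_cong: "p \<in> tensor_rel sc S n \<Longrightarrow> (\<And>v. p v = q v) \<Longrightarrow> q \<in> tensor_rel sc S n"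
proof -
  assume "p \<in> tensor_rel sc S n" "\<And>v. p v = q v"
  moreover then have "p = q" by (simp add: fun_eq_iff)
  ultimately show ?thesis by simp
qed

lemma tensor_rel_diff:
  assumes "p \<in> tensor_rel sc S n" "q \<in> tensor_rel sc S n"
  shows "(\<lambda>v. p v - q v) \<in> tensor_rel sc S n"
proof -
  have "(\<lambda>v. p v + (\<lambda>v. (-1) * q v) v) \<in> tensor_rel sc S n"
    using assms by (intro tensor_rel.add tensor_rel.smult)
  then show ?thesis by (rule tensor_rel_cong) simp
qed

lemma tensor_rel_sum_list:
  "(\<And>i. i \<in> set js \<Longrightarrow> P i \<in> tensor_rel sc S n) \<Longrightarrow> (\<lambda>v. \<Sum>i\<leftarrow>js. P i v) \<in> tensor_rel sc S n"
proof (induction js)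
  case Nil
  then show ?case using tensor_rel.zero by simp
next
  case (Cons i js)
  then have "(\<lambda>v. P i v + (\<lambda>v. \<Sum>i\<leftarrow>js. P i v) v) \<in> tensor_rel sc S n" by (intro tensor_rel.add) auto
  then show ?case by simp
qed

lemma of_nat_count_list_delta: "of_nat (count_list xs v) = (\<Sum>w\<leftarrow>xs. delta w v :: 'k::comm_ring_1)"
  by (induction xs) (auto simp: delta_def)

lemma tensor_eq_via_normal_form:
  fixes sc :: "'k::comm_ring_1 \<Rightarrow> 'a::ab_group_add \<Rightarrow> 'a"
  assumes "\<And>w. w \<in> set xs \<union> set ys \<Longrightarrow> (\<lambda>v. delta w v - N w v) \<in> tensor_rel sc S n"
    and "\<And>v. (\<Sum>w\<leftarrow>xs. N w v) = (\<Sum>w\<leftarrow>ys. N w v)"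
    and "\<forall>w \<in> set xs \<union> set ys. length w = n \<and> set w \<subseteq> S"
  shows "tensor_eq sc S n xs ys"
proof -
  have "(\<lambda>v. (\<lambda>v. \<Sum>w\<leftarrow>xs. delta w v - N w v) v - (\<lambda>v. \<Sum>w\<leftarrow>ys. delta w v - N w v) v) \<in> tensor_rel sc S n"
    by (rule tensor_rel_diff; rule tensor_rel_sum_list) (use assms(1) in auto)
  then have "(\<lambda>v. (of_nat (count_list xs v) :: 'k) - of_nat (count_list ys v)) \<in> tensor_rel sc S n"
    by (rule tensor_rel_cong) (simp add: of_nat_count_list_delta sum_list_subtractf assms(2))
  with assms(3) show ?thesis by (simp add: tensor_eq_def)
qed

lemma sum_list_swap_outer2:
  fixes F :: "'w \<Rightarrow> 'p \<Rightarrow> 'p \<Rightarrow> 'k::comm_ring_1"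
  shows "(\<Sum>w\<leftarrow>xs. \<Sum>p\<leftarrow>L. \<Sum>q\<leftarrow>L. F w p q * G p q) = (\<Sum>p\<leftarrow>L. \<Sum>q\<leftarrow>L. (\<Sum>w\<leftarrow>xs. F w p q) * G p q)"
  by (induction xs) (simp_all add: sum_list_addf distrib_right)

lemma sum_list_swap_outer3:
  fixes F :: "'w \<Rightarrow> 'p \<Rightarrow> 'p \<Rightarrow> 'p \<Rightarrow> 'k::comm_ring_1"
  shows "(\<Sum>w\<leftarrow>xs. \<Sum>p\<leftarrow>L. \<Sum>q\<leftarrow>L. \<Sum>s\<leftarrow>L. F w p q s * G p q s) = (\<Sum>p\<leftarrow>L. \<Sum>q\<leftarrow>L. \<Sum>s\<leftarrow>L. (\<Sum>w\<leftarrow>xs. F w p q s) * G p q s)"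
  by (induction xs) (simp_all add: sum_list_addf distrib_right)

context carrier_module
begin

lemma tensor_rel_slot_sum:
  assumes len: "length us + Suc (length vs) = n" and us: "set us \<subseteq> S" and vs: "set vs \<subseteq> S"
    and xs: "\<And>i. i \<in> set L \<Longrightarrow> x i \<in> S"
  shows "(\<lambda>v. delta (us @ (\<Sum>i\<leftarrow>L. sc (c i) (x i)) # vs) v - (\<Sum>i\<leftarrow>L. c i * delta (us @ x i # vs) v))
           \<in> tensor_rel sc S n"
  using xs
proof (induction L)
  case Nil
  have "(\<lambda>v. delta (us @ sc 0 0 # vs) v - 0 * delta (us @ 0 # vs) v) \<in> tensor_rel sc S n"
    by (rule tensor_rel.homog[OF len us vs]) simp
  then show ?case by (rule tensor_rel_cong) simp
next
  case (Cons i L)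
  let ?X = "\<Sum>i\<leftarrow>L. sc (c i) (x i)"
  have xi: "x i \<in> S" and X: "?X \<in> S" using Cons.prems by auto
  have "(\<lambda>v. (\<lambda>v. (\<lambda>v. delta (us @ (sc (c i) (x i) + ?X) # vs) v - delta (us @ sc (c i) (x i) # vs) v - delta (us @ ?X # vs) v) v
      + (\<lambda>v. delta (us @ sc (c i) (x i) # vs) v - c i * delta (us @ x i # vs) v) v) v
      + (\<lambda>v. delta (us @ ?X # vs) v - (\<Sum>i\<leftarrow>L. c i * delta (us @ x i # vs) v)) v) \<in> tensor_rel sc S n"
    using Cons xi X by (intro tensor_rel.add tensor_rel.additive[OF len us vs] tensor_rel.homog[OF len us vs]) auto
  then show ?case by (rule tensor_rel_cong) (simp add: algebra_simps)
qed

lemma tensor_rel_slot_expand: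
  assumes L: "dual_basis_on sc S L"
    and len: "length us + Suc (length vs) = n" and us: "set us \<subseteq> S" and vs: "set vs \<subseteq> S" and u: "u \<in> S"
  shows "(\<lambda>v. delta (us @ u # vs) v - (\<Sum>p\<leftarrow>L. fst p u * delta (us @ snd p # vs) v)) \<in> tensor_rel sc S n"
proof -
  have "(\<lambda>v. delta (us @ (\<Sum>p\<leftarrow>L. sc (fst p u) (snd p)) # vs) v - (\<Sum>p\<leftarrow>L. fst p u * delta (us @ snd p # vs) v))
          \<in> tensor_rel sc S n"
    by (rule tensor_rel_slot_sum[OF len us vs]) (use L in \<open>auto simp: dual_basis_on_def\<close>)
  moreover have "(\<Sum>p\<leftarrow>L. sc (fst p u) (snd p)) = u" using L u by (simp add: dual_basis_on_def split_def)
  ultimately show ?thesis by simp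
qed

lemma tensor_eq2_by_coordinates:
  assumes L: "dual_basis_on sc S L"
    and W: "\<forall>w\<in>set xs \<union> set ys. length w = 2 \<and> set w \<subseteq> S"
    and C: "\<And>p q. p \<in> set L \<Longrightarrow> q \<in> set L \<Longrightarrow>
        (\<Sum>w\<leftarrow>xs. fst p (w ! 0) * fst q (w ! Suc 0)) = (\<Sum>w\<leftarrow>ys. fst p (w ! 0) * fst q (w ! Suc 0))"
  shows "tensor_eq sc S 2 xs ys"
proof (rule tensor_eq_via_normal_form[where N = "\<lambda>w v. \<Sum>p\<leftarrow>L. \<Sum>q\<leftarrow>L. fst p (w ! 0) * fst q (w ! Suc 0) * delta [snd p, snd q] v"])
  show "\<forall>w\<in>set xs \<union> set ys. length w = 2 \<and> set w \<subseteq> S" by (rule W)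
next
  fix v
  show "(\<Sum>w\<leftarrow>xs. \<Sum>p\<leftarrow>L. \<Sum>q\<leftarrow>L. fst p (w ! 0) * fst q (w ! Suc 0) * delta [snd p, snd q] v) =
        (\<Sum>w\<leftarrow>ys. \<Sum>p\<leftarrow>L. \<Sum>q\<leftarrow>L. fst p (w ! 0) * fst q (w ! Suc 0) * delta [snd p, snd q] v)"
    unfolding sum_list_swap_outer2 using C by (intro sum_list_map_cong) simp
next
  fix w assume "w \<in> set xs \<union> set ys"
  then have "length w = 2" and "set w \<subseteq> S" using W by auto
  define u v where "u = w ! 0" and "v = w ! Suc 0"
  have w: "w = [u, v]" unfolding u_def v_def by (rule list_length2_eq) fact
  have uv: "u \<in> S" "v \<in> S" and bS: "p \<in> set L \<Longrightarrow> snd p \<in> S" for p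
    using \<open>set w \<subseteq> S\<close> w L by (auto simp: dual_basis_on_def)
  have "(\<lambda>z. (\<lambda>z. delta ([] @ u # [v]) z - (\<Sum>p\<leftarrow>L. fst p u * delta ([] @ snd p # [v]) z)) z +
      (\<lambda>z. \<Sum>p\<leftarrow>L. (\<lambda>z. fst p u * (\<lambda>z. delta ([snd p] @ v # []) z - (\<Sum>q\<leftarrow>L. fst q v * delta ([snd p] @ snd q # []) z)) z) z) z)
        \<in> tensor_rel sc S 2"
    by (intro tensor_rel.add tensor_rel_sum_list tensor_rel.smult tensor_rel_slot_expand[OF L])
      (use uv bS in auto)
  then show "(\<lambda>z. delta w z - (\<Sum>p\<leftarrow>L. \<Sum>q\<leftarrow>L. fst p (w ! 0) * fst q (w ! Suc 0) * delta [snd p, snd q] z))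
               \<in> tensor_rel sc S 2"
    by (rule tensor_rel_cong) (simp add: w right_diff_distrib sum_list_subtractf sum_list_const_mult mult.assoc)
qed

lemma tensor_eq3_by_coordinates:
  assumes L: "dual_basis_on sc S L"
    and W: "\<forall>w\<in>set xs \<union> set ys. length w = 3 \<and> set w \<subseteq> S"
    and C: "\<And>p q s. p \<in> set L \<Longrightarrow> q \<in> set L \<Longrightarrow> s \<in> set L \<Longrightarrow>
        (\<Sum>w\<leftarrow>xs. fst p (w ! 0) * fst q (w ! Suc 0) * fst s (w ! Suc (Suc 0))) =
        (\<Sum>w\<leftarrow>ys. fst p (w ! 0) * fst q (w ! Suc 0) * fst s (w ! Suc (Suc 0)))"
  shows "tensor_eq sc S 3 xs ys"
proof (rule tensor_eq_via_normal_form[where N = "\<lambda>w v. \<Sum>p\<leftarrow>L. \<Sum>q\<leftarrow>L. \<Sum>s\<leftarrow>L.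
    fst p (w ! 0) * fst q (w ! Suc 0) * fst s (w ! Suc (Suc 0)) * delta [snd p, snd q, snd s] v"])
  show "\<forall>w\<in>set xs \<union> set ys. length w = 3 \<and> set w \<subseteq> S" by (rule W)
next
  fix v
  show "(\<Sum>w\<leftarrow>xs. \<Sum>p\<leftarrow>L. \<Sum>q\<leftarrow>L. \<Sum>s\<leftarrow>L. fst p (w ! 0) * fst q (w ! Suc 0) * fst s (w ! Suc (Suc 0)) * delta [snd p, snd q, snd s] v) =
        (\<Sum>w\<leftarrow>ys. \<Sum>p\<leftarrow>L. \<Sum>q\<leftarrow>L. \<Sum>s\<leftarrow>L. fst p (w ! 0) * fst q (w ! Suc 0) * fst s (w ! Suc (Suc 0)) * delta [snd p, snd q, snd s] v)"
    unfolding sum_list_swap_outer3 using C by (intro sum_list_map_cong) simp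
next
  fix w assume "w \<in> set xs \<union> set ys"
  then have "length w = 3" and "set w \<subseteq> S" using W by auto
  define u v x where "u = w ! 0" and "v = w ! Suc 0" and "x = w ! Suc (Suc 0)"
  have w: "w = [u, v, x]" unfolding u_def v_def x_def by (rule list_length3_eq) fact
  have uvx: "u \<in> S" "v \<in> S" "x \<in> S" and bS: "p \<in> set L \<Longrightarrow> snd p \<in> S" for p
    using \<open>set w \<subseteq> S\<close> w L by (auto simp: dual_basis_on_def)
  have "(\<lambda>z. (\<lambda>z. (\<lambda>z. delta ([] @ u # [v, x]) z - (\<Sum>p\<leftarrow>L. fst p u * delta ([] @ snd p # [v, x]) z)) z +
      (\<lambda>z. \<Sum>p\<leftarrow>L. (\<lambda>z. fst p u * (\<lambda>z. delta ([snd p] @ v # [x]) z - (\<Sum>q\<leftarrow>L. fst q v * delta ([snd p] @ snd q # [x]) z)) z) z) z) z +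
      (\<lambda>z. \<Sum>p\<leftarrow>L. (\<lambda>z. fst p u * (\<lambda>z. \<Sum>q\<leftarrow>L. (\<lambda>z. fst q v * (\<lambda>z. delta ([snd p, snd q] @ x # []) z -
          (\<Sum>s\<leftarrow>L. fst s x * delta ([snd p, snd q] @ snd s # []) z)) z) z) z) z) z) \<in> tensor_rel sc S 3"
    by (intro tensor_rel.add tensor_rel_sum_list tensor_rel.smult tensor_rel_slot_expand[OF L])
      (use uvx bS in auto)
  then show "(\<lambda>z. delta w z - (\<Sum>p\<leftarrow>L. \<Sum>q\<leftarrow>L. \<Sum>s\<leftarrow>L. fst p (w ! 0) * fst q (w ! Suc 0) * fst s (w ! Suc (Suc 0)) * delta [snd p, snd q, snd s] z))
               \<in> tensor_rel sc S 3"
    by (rule tensor_rel_cong) (simp add: w right_diff_distrib sum_list_subtractf sum_list_const_mult mult.assoc)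
qed

end

definition sweedler :: "('a \<Rightarrow> ('a \<times> 'a) list) \<Rightarrow> 'a \<Rightarrow> ('a \<Rightarrow> 'a \<Rightarrow> 'b::comm_monoid_add) \<Rightarrow> 'b" where
  "sweedler cm a F = (\<Sum>(x, y)\<leftarrow>cm a. F x y)"

lemma sweedler_swap:
  "sweedler cm a (\<lambda>x y. sweedler cm' b (\<lambda>u v. F x y u v)) = sweedler cm' b (\<lambda>u v. sweedler cm a (\<lambda>x y. F x y u v))"
  unfolding sweedler_def split_def by (rule sum_list_map_swap)

lemma sweedler_swap4:
  "sweedler A a (\<lambda>x1 x2. sweedler B b (\<lambda>y1 y2. sweedler C c (\<lambda>a1 a2. sweedler E e (\<lambda>b1 b2. F x1 x2 y1 y2 a1 a2 b1 b2)))) =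
   sweedler C c (\<lambda>a1 a2. sweedler E e (\<lambda>b1 b2. sweedler A a (\<lambda>x1 x2. sweedler B b (\<lambda>y1 y2. F x1 x2 y1 y2 a1 a2 b1 b2))))"
  unfolding sweedler_def split_def by (rule sum_list_map_swap4)

lemma sweedler_mult_left: "(c::'k::comm_ring_1) * sweedler cm a F = sweedler cm a (\<lambda>x y. c * F x y)"
  by (simp add: sweedler_def sum_list_const_mult[symmetric] split_def)

lemma sweedler_mult_right: "sweedler cm a F * (c::'k::comm_ring_1) = sweedler cm a (\<lambda>x y. F x y * c)"
  by (simp add: sweedler_def sum_list_mult_const[symmetric] split_def)

lemma sweedler_cong: "(\<And>x y. (x, y) \<in> set (cm a) \<Longrightarrow> F x y = G x y) \<Longrightarrow> sweedler cm a F = sweedler cm a G"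
  unfolding sweedler_def by (rule sum_list_map_cong) auto

lemma sweedler_add: "sweedler cm a (\<lambda>x y. F x y + G x y) = sweedler cm a F + sweedler cm a G"
  by (simp add: sweedler_def sum_list_addf split_def)

lemma carrier_module_ring: "carrier_module (\<lambda>r s. r * s) (UNIV :: 'k::comm_ring_1 set)"
  by standard (simp add: module_on_def algebra_simps)

context carrier_module
begin

lemma sweedler_in [simp]: "(\<And>x y. (x, y) \<in> set (cm a) \<Longrightarrow> w x y \<in> S) \<Longrightarrow> sweedler cm a w \<in> S"
  unfolding sweedler_def by (rule sum_pairs_in)

lemma lin_on_sweedler:
  assumes "lin_on sc S sb F" "\<And>x y. (x, y) \<in> set (cm a) \<Longrightarrow> w x y \<in> S"
  shows "F (sweedler cm a w) = sweedler cm a (\<lambda>x y. F (w x y))"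
  using lin_on_sum_list[OF assms(1), of "cm a" "\<lambda>p. w (fst p) (snd p)"] assms(2)
  by (simp add: sweedler_def split_def)

lemma lin_on_sweedler_scale:
  assumes "lin_on sc S sb F" "\<And>x y. (x, y) \<in> set (cm a) \<Longrightarrow> w x y \<in> S"
  shows "F (sweedler cm a (\<lambda>x y. sc (h x y) (w x y))) = sweedler cm a (\<lambda>x y. sb (h x y) (F (w x y)))"
  unfolding sweedler_def by (rule lin_on_sum_pairs_scale) (use assms in auto)

lemma lin_on_sweedler_param:
  assumes T: "carrier_module sb T"
    and lin: "\<And>x y. (x, y) \<in> set (cm a) \<Longrightarrow> lin_on sc S sb (\<lambda>p. H p x y)"
    and in_T: "\<And>p x y. p \<in> S \<Longrightarrow> (x, y) \<in> set (cm a) \<Longrightarrow> H p x y \<in> T"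
  shows "lin_on sc S sb (\<lambda>p. sweedler cm a (H p))"
  unfolding lin_on_def
proof (intro conjI ballI allI)
  interpret T: carrier_module sb T by (rule T)
  fix p q assume "p \<in> S" "q \<in> S"
  then have "sweedler cm a (H (p + q)) = sweedler cm a (\<lambda>x y. H p x y + H q x y)"
    by (intro sweedler_cong) (simp add: lin_onD_add[OF lin])
  then show "sweedler cm a (H (p + q)) = sweedler cm a (H p) + sweedler cm a (H q)"
    by (simp add: sweedler_add)
next
  interpret T: carrier_module sb T by (rule T)
  fix r p assume p: "p \<in> S"
  then have "sweedler cm a (H (sc r p)) = sweedler cm a (\<lambda>x y. sb r (H p x y))"
    by (intro sweedler_cong) (simp add: lin_onD_scale[OF lin])
  also have "\<dots> = sb r (sweedler cm a (H p))"
    by (rule T.lin_on_sweedler[OF T.lin_on_scale, symmetric]) (use in_T p in auto)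
  finally show "sweedler cm a (H (sc r p)) = sb r (sweedler cm a (H p))" .
qed

lemma lin_functional_sweedler_param:
  "(\<And>x y. (x, y) \<in> set (cm a) \<Longrightarrow> lin_functional sc S (\<lambda>p. H p x y)) \<Longrightarrow>
    lin_functional sc S (\<lambda>p. sweedler cm a (H p))"
  by (rule lin_on_sweedler_param[OF carrier_module_ring]) auto

end

text \<open>The tensor axioms of a bialgebra in the form in which they are used: paired with
  bilinear and trilinear forms.\<close>

locale fgp_bialgebra = carrier_module sc S
  for sc :: "'k::comm_ring_1 \<Rightarrow> 'a::ab_group_add \<Rightarrow> 'a" and S +
  fixes mult :: "'a \<Rightarrow> 'a \<Rightarrow> 'a" and one :: 'a and comult :: "'a \<Rightarrow> ('a \<times> 'a) list" and counit :: "'a \<Rightarrow> 'k"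
  assumes mult_in [simp]: "a \<in> S \<Longrightarrow> b \<in> S \<Longrightarrow> mult a b \<in> S"
    and one_in [simp]: "one \<in> S"
    and lin_on_mult_right: "a \<in> S \<Longrightarrow> lin_on sc S sc (mult a)"
    and lin_on_mult_left: "b \<in> S \<Longrightarrow> lin_on sc S sc (\<lambda>a. mult a b)"
    and mult_assoc: "a \<in> S \<Longrightarrow> b \<in> S \<Longrightarrow> c \<in> S \<Longrightarrow> mult (mult a b) c = mult a (mult b c)"
    and mult_one_left [simp]: "a \<in> S \<Longrightarrow> mult one a = a"
    and mult_one_right [simp]: "a \<in> S \<Longrightarrow> mult a one = a"
    and comult_in: "a \<in> S \<Longrightarrow> (x, y) \<in> set (comult a) \<Longrightarrow> x \<in> S \<and> y \<in> S"
    and lin_functional_counit: "lin_functional sc S counit"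
    and counit_left: "a \<in> S \<Longrightarrow> sweedler comult a (\<lambda>x y. sc (counit x) y) = a"
    and counit_right: "a \<in> S \<Longrightarrow> sweedler comult a (\<lambda>x y. sc (counit y) x) = a"
    and counit_mult: "a \<in> S \<Longrightarrow> b \<in> S \<Longrightarrow> counit (mult a b) = counit a * counit b"
    and counit_one: "counit one = 1"
    and comult_add: "a \<in> S \<Longrightarrow> b \<in> S \<Longrightarrow> bilinear_on sc S B \<Longrightarrow>
        sweedler comult (a + b) B = sweedler comult a B + sweedler comult b B"
    and comult_scale: "a \<in> S \<Longrightarrow> bilinear_on sc S B \<Longrightarrow>
        sweedler comult (sc r a) B = sweedler comult a (\<lambda>x y. B (sc r x) y)"
    and comult_mult: "a \<in> S \<Longrightarrow> b \<in> S \<Longrightarrow> bilinear_on sc S B \<Longrightarrow>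
        sweedler comult (mult a b) B = sweedler comult a (\<lambda>a1 a2. sweedler comult b (\<lambda>b1 b2. B (mult a1 b1) (mult a2 b2)))"
    and comult_coassoc: "a \<in> S \<Longrightarrow> trilinear_on sc S C \<Longrightarrow>
        sweedler comult a (\<lambda>a1 a2. sweedler comult a1 (\<lambda>b1 b2. C b1 b2 a2)) =
        sweedler comult a (\<lambda>a1 a2. sweedler comult a2 (\<lambda>c1 c2. C a1 c1 c2))"
    and comult_one: "bilinear_on sc S B \<Longrightarrow> sweedler comult one B = B one one"
    and dual_basis_exists: "\<exists>L. dual_basis_on sc S L"

lemma fgp_bialgebraI:
  fixes sc :: "'k::comm_ring_1 \<Rightarrow> 'a::ab_group_add \<Rightarrow> 'a"
  assumes B: "bialgebra sc S mult one comult counit" and P: "fin_gen_proj sc S"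
  shows "fgp_bialgebra sc S mult one comult counit"
proof -
  have M: "module_on sc S" using B by (simp add: bialgebra_def)
  note ax = B[unfolded bialgebra_def]
  show ?thesis
  proof (unfold_locales)
    show "\<exists>L. dual_basis_on sc S L" by (rule fin_gen_proj_dual_basis[OF M P])
  next
    fix a b B' assume ab: "a \<in> S" "b \<in> S" and bl: "bilinear_on sc S B'"
    have "tensor_eq sc S 2 (tens2 (comult (a + b))) (tens2 (comult a @ comult b))" using ax ab by blast
    from tensor_eq_bilinear_eval[OF this bl]
    show "sweedler comult (a + b) B' = sweedler comult a B' + sweedler comult b B'"
      by (simp add: sum_list_tens2 sweedler_def tens2_append)
  next
    fix a r B' assume a: "a \<in> S" and bl: "bilinear_on sc S B'"
    have "tensor_eq sc S 2 (tens2 (comult (sc r a))) (map (\<lambda>(x, y). [sc r x, y]) (comult a))" using ax a by blast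
    from tensor_eq_bilinear_eval[OF this bl]
    show "sweedler comult (sc r a) B' = sweedler comult a (\<lambda>x y. B' (sc r x) y)"
      by (simp add: sum_list_tens2 sweedler_def o_def split_def)
  next
    fix a b B' assume ab: "a \<in> S" "b \<in> S" and bl: "bilinear_on sc S B'"
    have "tensor_eq sc S 2 (tens2 (comult (mult a b)))
        (concat (map (\<lambda>(a1, a2). map (\<lambda>(b1, b2). [mult a1 b1, mult a2 b2]) (comult b)) (comult a)))"
      using ax ab by blast
    from tensor_eq_bilinear_eval[OF this bl]
    show "sweedler comult (mult a b) B' =
        sweedler comult a (\<lambda>a1 a2. sweedler comult b (\<lambda>b1 b2. B' (mult a1 b1) (mult a2 b2)))"
      by (simp add: sum_list_tens2 sweedler_def o_def split_def sum_list_concat_map)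
  next
    fix a C assume a: "a \<in> S" and tl: "trilinear_on sc S C"
    have "tensor_eq sc S 3
        (concat (map (\<lambda>(a1, a2). map (\<lambda>(b1, b2). [b1, b2, a2]) (comult a1)) (comult a)))
        (concat (map (\<lambda>(a1, a2). map (\<lambda>(c1, c2). [a1, c1, c2]) (comult a2)) (comult a)))"
      using ax a by blast
    from tensor_eq_trilinear_eval[OF this tl]
    show "sweedler comult a (\<lambda>a1 a2. sweedler comult a1 (\<lambda>b1 b2. C b1 b2 a2)) =
        sweedler comult a (\<lambda>a1 a2. sweedler comult a2 (\<lambda>c1 c2. C a1 c1 c2))"
      by (simp add: sweedler_def o_def split_def sum_list_concat_map)
  next
    fix B' assume bl: "bilinear_on sc S B'"
    have "tensor_eq sc S 2 (tens2 (comult one)) [[one, one]]" using ax by blast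
    from tensor_eq_bilinear_eval[OF this bl]
    show "sweedler comult one B' = B' one one"
      by (simp add: sum_list_tens2 sweedler_def)
  qed (use ax in \<open>auto simp: sweedler_def\<close>)
qed

context fgp_bialgebra
begin

lemma comult_memD: "(x, y) \<in> set (comult a) \<Longrightarrow> a \<in> S \<Longrightarrow> x \<in> S \<and> y \<in> S"
  using comult_in by blast

lemma sweedler_comult_in [simp]:
  "a \<in> S \<Longrightarrow> (\<And>x y. x \<in> S \<Longrightarrow> y \<in> S \<Longrightarrow> w x y \<in> S) \<Longrightarrow> sweedler comult a w \<in> S"
  by (rule sweedler_in) (auto dest: comult_memD)

lemma mult_scale_left: "b \<in> S \<Longrightarrow> x \<in> S \<Longrightarrow> mult (sc r x) b = sc r (mult x b)"
  using lin_on_mult_left by (simp add: lin_on_def)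

lemma mult_scale_right: "a \<in> S \<Longrightarrow> x \<in> S \<Longrightarrow> mult a (sc r x) = sc r (mult a x)"
  using lin_on_mult_right by (simp add: lin_on_def)

lemma lin_functional_mult_right: "lin_functional sc S g \<Longrightarrow> a \<in> S \<Longrightarrow> lin_functional sc S (\<lambda>x. g (mult a x))"
  by (rule lin_on_compose[OF lin_on_mult_right]) auto

lemma lin_functional_mult_left: "lin_functional sc S g \<Longrightarrow> b \<in> S \<Longrightarrow> lin_functional sc S (\<lambda>x. g (mult x b))"
  by (rule lin_on_compose[OF lin_on_mult_left]) auto

definition dual_basis :: "(('a \<Rightarrow> 'k) \<times> 'a) list" where
  "dual_basis = (SOME L. dual_basis_on sc S L)"

lemma dual_basis: "dual_basis_on sc S dual_basis"
  unfolding dual_basis_def using dual_basis_exists by (rule someI_ex)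

lemma dual_basis_functional: "(\<mu>, m) \<in> set dual_basis \<Longrightarrow> lin_functional sc S \<mu>"
  using dual_basis by (auto simp: dual_basis_on_def)

lemma dual_basis_expand: "x \<in> S \<Longrightarrow> (\<Sum>(\<mu>, m)\<leftarrow>dual_basis. sc (\<mu> x) m) = x"
  using dual_basis by (simp add: dual_basis_on_def)

lemma linear_functional_ext:
  assumes "x \<in> S" "y \<in> S" "\<And>g. lin_functional sc S g \<Longrightarrow> g x = g y"
  shows "x = y"
proof -
  have "x = (\<Sum>(\<mu>, m)\<leftarrow>dual_basis. sc (\<mu> x) m)" using dual_basis_expand assms(1) by simp
  also have "\<dots> = (\<Sum>(\<mu>, m)\<leftarrow>dual_basis. sc (\<mu> y) m)"
    by (rule sum_list_map_cong) (auto simp: assms(3) dual_basis_functional)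
  also have "\<dots> = y" using dual_basis_expand assms(2) by simp
  finally show ?thesis .
qed

lemma fgp_bialgebra_op: "fgp_bialgebra sc S (\<lambda>a b. mult b a) one comult counit"
proof unfold_locales
  fix a b B assume "a \<in> S" "b \<in> S" "bilinear_on sc S B"
  then show "sweedler comult (mult b a) B =
      sweedler comult a (\<lambda>a1 a2. sweedler comult b (\<lambda>b1 b2. B (mult b1 a1) (mult b2 a2)))"
    by (simp add: comult_mult[of b a] sweedler_swap[of comult b])
qed (rule mult_in lin_on_mult_left lin_on_mult_right comult_in counit_left counit_right comult_add
    comult_scale comult_coassoc comult_one; assumption
  | simp add: mult_assoc counit_mult lin_functional_counit counit_one dual_basis_exists)+

end

section \<open>The antipode defined by integrals\<close>

locale integral_data = fgp_bialgebra sc S mult one comult counit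
  for sc :: "'k::comm_ring_1 \<Rightarrow> 'a::ab_group_add \<Rightarrow> 'a" and S mult one comult counit +
  fixes f :: "'a \<Rightarrow> 'k" and t t' :: 'a
  assumes lin_functional_f: "lin_functional sc S f"
    and f_right_integral: "a \<in> S \<Longrightarrow> sweedler comult a (\<lambda>x y. sc (f x) y) = sc (f a) one"
    and t_in [simp]: "t \<in> S" and f_mult_t: "b \<in> S \<Longrightarrow> f (mult t b) = counit b"
    and t'_in [simp]: "t' \<in> S" and mult_t': "b \<in> S \<Longrightarrow> mult b t' = sc (counit b) t'"
    and f_t': "f t' = 1"
begin

definition antipode :: "'a \<Rightarrow> 'a" where
  "antipode c = sweedler comult t (\<lambda>u v. sc (f (mult u c)) v)"

definition antipode' :: "'a \<Rightarrow> 'a" where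
  "antipode' c = sweedler comult t' (\<lambda>x y. sc (f (mult c x)) y)"

lemma antipode_in [simp]: "antipode c \<in> S"
  unfolding antipode_def by (rule sweedler_in) (auto dest: comult_memD)

lemma antipode'_in [simp]: "antipode' c \<in> S"
  unfolding antipode'_def by (rule sweedler_in) (auto dest: comult_memD)

lemma lin_on_antipode: "lin_on sc S sc antipode"
  unfolding antipode_def[abs_def]
proof (rule lin_on_sweedler_param[OF carrier_module_axioms])
  fix x y assume "(x, y) \<in> set (comult t)"
  then have x: "x \<in> S" and y: "y \<in> S" by (auto dest: comult_memD)
  show "lin_on sc S sc (\<lambda>p. sc (f (mult x p)) y)"
    using lin_functional_mult_right[OF lin_functional_f x] y
    by (simp add: lin_on_def scale_add_left scale_scale)
qed (auto dest: comult_memD)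

lemma lin_on_antipode': "lin_on sc S sc antipode'"
  unfolding antipode'_def[abs_def]
proof (rule lin_on_sweedler_param[OF carrier_module_axioms])
  fix x y assume "(x, y) \<in> set (comult t')"
  then have x: "x \<in> S" and y: "y \<in> S" by (auto dest: comult_memD)
  show "lin_on sc S sc (\<lambda>p. sc (f (mult p x)) y)"
    using lin_functional_mult_left[OF lin_functional_f x] y
    by (simp add: lin_on_def scale_add_left scale_scale)
qed (auto dest: comult_memD)

lemma antipode_left:
  assumes a: "a \<in> S"
  shows "sweedler comult a (\<lambda>x y. mult (antipode x) y) = sc (counit a) one"
proof (rule linear_functional_ext)
  show "sweedler comult a (\<lambda>x y. mult (antipode x) y) \<in> S" using a by simp
  show "sc (counit a) one \<in> S" by simp
  fix g assume g: "lin_functional sc S g"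
  have g_antipode_mult: "g (mult (antipode x) y) = sweedler comult t (\<lambda>u v. f (mult u x) * g (mult v y))"
    if "y \<in> S" for x y
  proof -
    have "mult (antipode x) y = sweedler comult t (\<lambda>u v. sc (f (mult u x)) (mult v y))"
      unfolding antipode_def using that by (subst lin_on_sweedler_scale[OF lin_on_mult_left]) (auto dest: comult_memD)
    then show ?thesis
      using that by (simp, subst lin_on_sweedler_scale[OF g]) (auto dest: comult_memD)
  qed
  have "g (sweedler comult a (\<lambda>x y. mult (antipode x) y)) = sweedler comult a (\<lambda>x y. g (mult (antipode x) y))"
    using a by (intro lin_on_sweedler[OF g]) (auto dest: comult_memD)
  also have "\<dots> = sweedler comult a (\<lambda>x y. sweedler comult t (\<lambda>u v. f (mult u x) * g (mult v y)))"
    using a by (intro sweedler_cong) (auto dest: comult_memD simp: g_antipode_mult)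
  also have "\<dots> = sweedler comult t (\<lambda>u v. sweedler comult a (\<lambda>x y. f (mult u x) * g (mult v y)))"
    by (rule sweedler_swap)
  also have "\<dots> = sweedler comult (mult t a) (\<lambda>p q. f p * g q)"
    using comult_mult[OF t_in a bilinear_on_prod[OF lin_functional_f g]] by simp
  also have "\<dots> = g (sweedler comult (mult t a) (\<lambda>p q. sc (f p) q))"
    using a by (subst lin_on_sweedler_scale[OF g]) (auto dest: comult_memD)
  also have "\<dots> = g (sc (counit a) one)"
    using a by (simp add: f_right_integral f_mult_t)
  finally show "g (sweedler comult a (\<lambda>x y. mult (antipode x) y)) = g (sc (counit a) one)" .
qed

lemma antipode_counit_expand: "c \<in> S \<Longrightarrow> antipode c = sweedler comult c (\<lambda>c1 c2. sc (counit c2) (antipode c1))"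
  using lin_on_sweedler_scale[OF lin_on_antipode, of comult c "\<lambda>x y. x" "\<lambda>x y. counit y"] counit_right[of c]
  by (auto dest: comult_memD)

lemma functional_antipode':
  "lin_functional sc S g \<Longrightarrow> g (antipode' h) = sweedler comult t' (\<lambda>x y. f (mult h x) * g y)"
  unfolding antipode'_def by (rule lin_on_sweedler_scale) (auto dest: comult_memD)

text \<open>This is b t' = \<epsilon>(b) t' seen through the comultiplication.\<close>

lemma counit_sweedler_t':
  assumes b: "b \<in> S" and B: "bilinear_on sc S B"
  shows "counit b * sweedler comult t' B = sweedler comult b (\<lambda>d1 d2. sweedler comult t' (\<lambda>x y. B (mult d1 x) (mult d2 y)))"
proof -
  have "counit b * sweedler comult t' B = sweedler comult t' (\<lambda>x y. B (sc (counit b) x) y)"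
    unfolding sweedler_mult_left by (intro sweedler_cong) (auto dest: comult_memD simp: bilinear_onD[OF B])
  also have "\<dots> = sweedler comult (mult b t') B" using comult_scale[OF t'_in B] mult_t'[OF b] by simp
  also have "\<dots> = sweedler comult b (\<lambda>d1 d2. sweedler comult t' (\<lambda>x y. B (mult d1 x) (mult d2 y)))"
    by (rule comult_mult[OF b t'_in B])
  finally show ?thesis .
qed

lemma sweedler_f_antipode_mult:
  assumes a: "a \<in> S" and x: "x \<in> S"
  shows "sweedler comult a (\<lambda>b1 b2. f (mult (antipode b1) (mult b2 x))) = counit a * f x"
proof -
  have "sweedler comult a (\<lambda>b1 b2. f (mult (antipode b1) (mult b2 x))) =
      sweedler comult a (\<lambda>b1 b2. f (mult (mult (antipode b1) b2) x))"
    using a x by (intro sweedler_cong) (auto dest: comult_memD simp: mult_assoc)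
  also have "\<dots> = f (mult (sweedler comult a (\<lambda>b1 b2. mult (antipode b1) b2)) x)"
    using a by (subst lin_on_sweedler[OF lin_functional_mult_left[OF lin_functional_f x]]) (auto dest: comult_memD)
  also have "\<dots> = counit a * f x"
    using a x by (simp add: antipode_left mult_scale_left lin_onD_scale[OF lin_functional_f])
  finally show ?thesis .
qed

lemma trilinear_antipode_form:
  assumes g: "lin_functional sc S g"
  shows "trilinear_on sc S (\<lambda>p q r. sweedler comult t' (\<lambda>x y. f (mult (antipode p) (mult q x)) * g (mult r y)))"
  unfolding trilinear_on_def
proof (intro conjI ballI)
  fix q r assume "q \<in> S" "r \<in> S"
  show "lin_functional sc S (\<lambda>p. sweedler comult t' (\<lambda>x y. f (mult (antipode p) (mult q x)) * g (mult r y)))"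
  proof (rule lin_functional_sweedler_param, rule lin_functional_mult_const)
    fix x y assume "(x, y) \<in> set (comult t')"
    then have "x \<in> S" by (auto dest: comult_memD)
    then show "lin_functional sc S (\<lambda>p. f (mult (antipode p) (mult q x)))"
      using \<open>q \<in> S\<close> by (intro lin_on_compose[OF lin_on_antipode] lin_functional_mult_left lin_functional_f) auto
  qed
next
  fix p r assume "p \<in> S" "r \<in> S"
  show "lin_functional sc S (\<lambda>q. sweedler comult t' (\<lambda>x y. f (mult (antipode p) (mult q x)) * g (mult r y)))"
  proof (rule lin_functional_sweedler_param, rule lin_functional_mult_const)
    fix x y assume "(x, y) \<in> set (comult t')"
    then have "x \<in> S" by (auto dest: comult_memD)
    then show "lin_functional sc S (\<lambda>q. f (mult (antipode p) (mult q x)))"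
      by (intro lin_on_compose[OF lin_on_mult_left] lin_functional_mult_right lin_functional_f) auto
  qed
next
  fix p q assume "p \<in> S" "q \<in> S"
  show "lin_functional sc S (\<lambda>r. sweedler comult t' (\<lambda>x y. f (mult (antipode p) (mult q x)) * g (mult r y)))"
  proof (rule lin_functional_sweedler_param, rule lin_functional_const_mult)
    fix x y assume "(x, y) \<in> set (comult t')"
    then show "lin_functional sc S (\<lambda>r. g (mult r y))"
      by (intro lin_functional_mult_left[OF g]) (auto dest: comult_memD)
  qed
qed

text \<open>Expand antipode c along the counit, let t' absorb the resulting comultiplication,
  reassociate, and collapse with antipode_left; finally f is a right integral with f t' = 1.\<close>

lemma antipode'_antipode:
  assumes c: "c \<in> S"
  shows "antipode' (antipode c) = c"
proof (rule linear_functional_ext)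
  fix g assume g: "lin_functional sc S g"
  define C where "C p q r = sweedler comult t' (\<lambda>x y. f (mult (antipode p) (mult q x)) * g (mult r y))" for p q r
  have g_antipode': "lin_functional sc S (\<lambda>h. g (antipode' h))"
    by (rule lin_on_compose[OF lin_on_antipode' _ g]) simp
  have "g (antipode' (antipode c)) = sweedler comult c (\<lambda>c1 c2. counit c2 * g (antipode' (antipode c1)))"
    unfolding antipode_counit_expand[OF c] using c
    by (subst lin_on_sweedler_scale[OF g_antipode']) (auto dest: comult_memD)
  also have "\<dots> = sweedler comult c (\<lambda>a1 a2. sweedler comult a2 (\<lambda>c1 c2. C a1 c1 c2))"
    using c unfolding C_def
    by (intro sweedler_cong) (auto dest: comult_memD simp: functional_antipode'[OF g]
        counit_sweedler_t'[OF _ bilinear_on_prod[OF lin_functional_mult_right[OF lin_functional_f] g]])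
  also have "\<dots> = sweedler comult c (\<lambda>a1 a2. sweedler comult a1 (\<lambda>b1 b2. C b1 b2 a2))"
    using comult_coassoc[OF c trilinear_antipode_form[OF g]] by (simp add: C_def)
  also have "\<dots> = sweedler comult c (\<lambda>a1 a2. counit a1 * sweedler comult t' (\<lambda>x y. f x * g (mult a2 y)))"
  proof (rule sweedler_cong)
    fix a1 a2 assume "(a1, a2) \<in> set (comult c)"
    then have "a1 \<in> S" using c by (auto dest: comult_memD)
    have "sweedler comult a1 (\<lambda>b1 b2. C b1 b2 a2) =
        sweedler comult t' (\<lambda>x y. sweedler comult a1 (\<lambda>b1 b2. f (mult (antipode b1) (mult b2 x))) * g (mult a2 y))"
      unfolding C_def sweedler_mult_right by (rule sweedler_swap)
    also have "\<dots> = counit a1 * sweedler comult t' (\<lambda>x y. f x * g (mult a2 y))"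
      unfolding sweedler_mult_left using \<open>a1 \<in> S\<close>
      by (intro sweedler_cong) (auto dest: comult_memD simp: sweedler_f_antipode_mult)
    finally show "sweedler comult a1 (\<lambda>b1 b2. C b1 b2 a2) = counit a1 * sweedler comult t' (\<lambda>x y. f x * g (mult a2 y))" .
  qed
  also have "\<dots> = sweedler comult t' (\<lambda>x y. f x * sweedler comult c (\<lambda>a1 a2. counit a1 * g (mult a2 y)))"
    by (simp add: sweedler_mult_left sweedler_swap[of comult c] mult.left_commute)
  also have "\<dots> = sweedler comult t' (\<lambda>x y. f x * g (mult c y))"
  proof (rule sweedler_cong)
    fix x y assume "(x, y) \<in> set (comult t')"
    then have y: "y \<in> S" by (auto dest: comult_memD)
    have "sweedler comult c (\<lambda>a1 a2. counit a1 * g (mult a2 y)) = g (mult (sweedler comult c (\<lambda>a1 a2. sc (counit a1) a2)) y)"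
      using c by (subst lin_on_sweedler_scale[OF lin_functional_mult_left[OF g y]]) (auto dest: comult_memD)
    then show "f x * sweedler comult c (\<lambda>a1 a2. counit a1 * g (mult a2 y)) = f x * g (mult c y)"
      using counit_left[OF c] by simp
  qed
  also have "\<dots> = g (mult c (sweedler comult t' (\<lambda>x y. sc (f x) y)))"
    using c by (subst lin_on_sweedler_scale[OF lin_functional_mult_right[OF g c]]) (auto dest: comult_memD)
  also have "\<dots> = g c"
    using c by (simp add: f_right_integral f_t' mult_scale_right)
  finally show "g (antipode' (antipode c)) = g c" .
qed (use c in simp_all)

end

section \<open>Integrals of an FH-algebra\<close>

locale fh_structure = fgp_bialgebra sc S mult one comult counit
  for sc :: "'k::comm_ring_1 \<Rightarrow> 'a::ab_group_add \<Rightarrow> 'a" and S mult one comult counit +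
  fixes f :: "'a \<Rightarrow> 'k" and xys :: "('a \<times> 'a) list"
  assumes lin_functional_f: "lin_functional sc S f"
    and frobenius_pairs_in: "(x, y) \<in> set xys \<Longrightarrow> x \<in> S \<and> y \<in> S"
    and frobenius_left: "a \<in> S \<Longrightarrow> (\<Sum>(x, y)\<leftarrow>xys. sc (f (mult y a)) x) = a"
    and frobenius_right: "a \<in> S \<Longrightarrow> (\<Sum>(x, y)\<leftarrow>xys. sc (f (mult a x)) y) = a"
    and f_right_integral: "a \<in> S \<Longrightarrow> sweedler comult a (\<lambda>x y. sc (f x) y) = sc (f a) one"
begin

definition right_integral :: 'a where
  "right_integral = (\<Sum>(x, y)\<leftarrow>xys. sc (counit x) y)"

definition left_integral :: 'a where
  "left_integral = (\<Sum>(x, y)\<leftarrow>xys. sc (counit y) x)"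

lemma right_integral_in [simp]: "right_integral \<in> S"
  unfolding right_integral_def by (rule sum_pairs_in) (simp add: frobenius_pairs_in)

lemma left_integral_in [simp]: "left_integral \<in> S"
  unfolding left_integral_def by (rule sum_pairs_in) (simp add: frobenius_pairs_in)

lemma f_mult_right_integral:
  assumes b: "b \<in> S"
  shows "f (mult right_integral b) = counit b"
proof -
  have "f (mult right_integral b) = (\<Sum>(x, y)\<leftarrow>xys. counit x * f (mult y b))"
    unfolding right_integral_def using b frobenius_pairs_in
    by (simp add: lin_on_sum_pairs_scale[OF lin_on_mult_left] lin_on_sum_pairs_scale[OF lin_functional_f])
  also have "\<dots> = counit (\<Sum>(x, y)\<leftarrow>xys. sc (f (mult y b)) x)"
    using frobenius_pairs_in by (simp add: lin_on_sum_pairs_scale[OF lin_functional_counit] mult.commute)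
  also have "\<dots> = counit b" using frobenius_left[OF b] by simp
  finally show ?thesis .
qed

lemma f_mult_left_integral:
  assumes b: "b \<in> S"
  shows "f (mult b left_integral) = counit b"
proof -
  have "f (mult b left_integral) = (\<Sum>(x, y)\<leftarrow>xys. counit y * f (mult b x))"
    unfolding left_integral_def using b frobenius_pairs_in
    by (simp add: lin_on_sum_pairs_scale[OF lin_on_mult_right] lin_on_sum_pairs_scale[OF lin_functional_f])
  also have "\<dots> = counit (\<Sum>(x, y)\<leftarrow>xys. sc (f (mult b x)) y)"
    using frobenius_pairs_in by (simp add: lin_on_sum_pairs_scale[OF lin_functional_counit] mult.commute)
  also have "\<dots> = counit b" using frobenius_right[OF b] by simp
  finally show ?thesis .
qed

lemma right_integral_mult:
  assumes b: "b \<in> S"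
  shows "mult right_integral b = sc (counit b) right_integral"
proof -
  have "mult right_integral b = (\<Sum>(x, y)\<leftarrow>xys. sc (f (mult (mult right_integral b) x)) y)"
    using frobenius_right[of "mult right_integral b"] b by simp
  also have "\<dots> = (\<Sum>(x, y)\<leftarrow>xys. sc (counit x) (sc (counit b) y))"
    using b frobenius_pairs_in
    by (intro sum_list_map_cong) (auto simp: mult_assoc f_mult_right_integral counit_mult scale_scale mult.commute)
  also have "\<dots> = sc (counit b) right_integral"
    unfolding right_integral_def using frobenius_pairs_in
    by (simp add: lin_on_sum_pairs_scale[OF lin_on_scale])
  finally show ?thesis .
qed

lemma mult_left_integral:
  assumes b: "b \<in> S"
  shows "mult b left_integral = sc (counit b) left_integral"
proof -
  have "mult b left_integral = (\<Sum>(x, y)\<leftarrow>xys. sc (f (mult y (mult b left_integral))) x)"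
    using frobenius_left[of "mult b left_integral"] b by simp
  also have "\<dots> = (\<Sum>(x, y)\<leftarrow>xys. sc (counit y) (sc (counit b) x))"
    using b frobenius_pairs_in
    by (intro sum_list_map_cong) (auto simp: mult_assoc[symmetric] f_mult_left_integral counit_mult scale_scale mult.commute)
  also have "\<dots> = sc (counit b) left_integral"
    unfolding left_integral_def using frobenius_pairs_in
    by (simp add: lin_on_sum_pairs_scale[OF lin_on_scale])
  finally show ?thesis .
qed

lemma f_right_integral_eq_one: "f right_integral = 1"
  using f_mult_right_integral[of one] by (simp add: counit_one)

lemma f_left_integral_eq_one: "f left_integral = 1"
  using f_mult_left_integral[of one] by (simp add: counit_one)

end

sublocale fh_structure \<subseteq> integral_data sc S mult one comult counit f right_integral left_integral
  by unfold_locales (simp_all add: lin_functional_f f_right_integral f_mult_right_integral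
      mult_left_integral f_left_integral_eq_one)

sublocale fh_structure \<subseteq> op: integral_data sc S "\<lambda>a b. mult b a" one comult counit f left_integral right_integral
proof (rule integral_data.intro[OF fgp_bialgebra_op], unfold_locales)
qed (simp_all add: lin_functional_f f_right_integral f_mult_left_integral right_integral_mult f_right_integral_eq_one)

context fh_structure
begin

lemma antipode_antipode':
  assumes "c \<in> S"
  shows "antipode (antipode' c) = c"
proof -
  have "op.antipode = antipode'" "op.antipode' = antipode"
    by (simp_all add: fun_eq_iff op.antipode_def antipode'_def op.antipode'_def antipode_def)
  then show ?thesis using op.antipode'_antipode[OF assms] by simp
qed

end

section \<open>The dual bialgebra\<close>

locale fgp_bialgebra_dual = fgp_bialgebra sc UNIV mult one comult counit
  for sc :: "'k::comm_ring_1 \<Rightarrow> 'a::ab_group_add \<Rightarrow> 'a" and mult one comult counit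
begin

abbreviation Hd :: "('a \<Rightarrow> 'k) set" where "Hd \<equiv> dual_carrier sc UNIV"
abbreviation dmult where "dmult \<equiv> dual_mult (UNIV :: 'a set) comult"
abbreviation dcomult where "dcomult \<equiv> dual_comult sc (UNIV :: 'a set) mult"

lemma dual_carrier_iff: "g \<in> Hd \<longleftrightarrow> lin_functional sc UNIV g"
  by (simp add: dual_carrier_def)

lemma dual_mult_apply: "dmult g h x = sweedler comult x (\<lambda>x1 x2. g x1 * h x2)"
  by (simp add: dual_mult_def sweedler_def)

lemma dual_one_eq: "dual_one (UNIV :: 'a set) counit = counit"
  by (simp add: dual_one_def fun_eq_iff)

lemma counit_in_dual: "counit \<in> Hd"
  using lin_functional_counit by (simp add: dual_carrier_iff)

lemma module_on_dual: "module_on dual_scale Hd"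
  unfolding module_on_def by (auto simp: dual_carrier_iff lin_on_def dual_scale_def fun_eq_iff algebra_simps)

sublocale dual: carrier_module dual_scale Hd
  by (rule carrier_module.intro[OF module_on_dual])

lemma dual_basis_in_dual: "(\<mu>, m) \<in> set dual_basis \<Longrightarrow> \<mu> \<in> Hd"
  by (simp add: dual_carrier_iff dual_basis_functional)

lemma functional_expand: "g \<in> Hd \<Longrightarrow> g x = (\<Sum>(\<mu>, m)\<leftarrow>dual_basis. g m * \<mu> x)"
  using lin_on_sum_pairs_scale[of "\<lambda>r s. r * s" g dual_basis "\<lambda>\<mu> m. m" "\<lambda>\<mu> m. \<mu> x"] dual_basis_expand[of x]
  by (simp add: dual_carrier_iff mult.commute)

lemma dual_expand:
  assumes g: "g \<in> Hd"
  shows "(\<Sum>(\<mu>, m)\<leftarrow>dual_basis. dual_scale (g m) \<mu>) = g"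
proof
  fix x
  have "(\<Sum>(\<mu>, m)\<leftarrow>dual_basis. dual_scale (g m) \<mu>) x = (\<Sum>(\<mu>, m)\<leftarrow>dual_basis. g m * \<mu> x)"
    unfolding sum_list_map_apply by (rule sum_list_map_cong) (auto simp: dual_scale_def)
  also have "\<dots> = g x" by (rule functional_expand[OF g, symmetric])
  finally show "(\<Sum>(\<mu>, m)\<leftarrow>dual_basis. dual_scale (g m) \<mu>) x = g x" .
qed

lemma dual_basis_ext:
  assumes "\<And>\<mu> m. (\<mu>, m) \<in> set dual_basis \<Longrightarrow> \<mu> x = \<mu> y"
  shows "x = y"
proof -
  have "x = (\<Sum>(\<mu>, m)\<leftarrow>dual_basis. sc (\<mu> x) m)" using dual_basis_expand[of x] by simp
  also have "\<dots> = (\<Sum>(\<mu>, m)\<leftarrow>dual_basis. sc (\<mu> y) m)"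
    by (rule sum_list_map_cong) (auto simp: assms)
  also have "\<dots> = y" using dual_basis_expand[of y] by simp
  finally show ?thesis .
qed

lemma dual_basis_on_dual:
  "dual_basis_on dual_scale Hd (map (\<lambda>(\<mu>, m). ((\<lambda>g. g m), \<mu>)) dual_basis)"
proof -
  have "lin_functional dual_scale Hd (\<lambda>g. g m)" for m
    by (simp add: lin_on_def dual_scale_def)
  then show ?thesis
    unfolding dual_basis_on_def sum_list_map_pairs by (auto simp: dual_basis_in_dual dual_expand)
qed

lemma dual_mult_in: "g \<in> Hd \<Longrightarrow> h \<in> Hd \<Longrightarrow> dmult g h \<in> Hd"
proof -
  assume "g \<in> Hd" "h \<in> Hd"
  then have B: "bilinear_on sc UNIV (\<lambda>x y. g x * h y)" by (intro bilinear_on_prod) (simp_all add: dual_carrier_iff)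
  show ?thesis unfolding dual_carrier_iff lin_on_def dual_mult_apply
    using comult_add[OF _ _ B] comult_scale[OF _ B] by (simp add: bilinear_onD[OF B] sweedler_mult_left)
qed

lemma dual_comult_exists:
  assumes g: "g \<in> Hd"
  shows "\<exists>L. (\<forall>(u, v)\<in>set L. u \<in> Hd \<and> v \<in> Hd) \<and>
      (\<forall>a\<in>UNIV. \<forall>b\<in>UNIV. (\<Sum>(u, v)\<leftarrow>L. u a * v b) = g (mult a b))"
proof (intro exI[of _ "map (\<lambda>(\<mu>, m). (\<mu>, \<lambda>b. g (mult m b))) dual_basis"] conjI ballI)
  fix p assume "p \<in> set (map (\<lambda>(\<mu>, m). (\<mu>, \<lambda>b. g (mult m b))) dual_basis)"
  then show "case p of (u, v) \<Rightarrow> u \<in> Hd \<and> v \<in> Hd"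
    using g by (auto simp: dual_carrier_iff dual_basis_functional lin_functional_mult_right)
next
  fix a b :: 'a
  have "g (mult a b) = g (mult (\<Sum>(\<mu>, m)\<leftarrow>dual_basis. sc (\<mu> a) m) b)" using dual_basis_expand[of a] by simp
  also have "\<dots> = (\<Sum>(\<mu>, m)\<leftarrow>dual_basis. \<mu> a * g (mult m b))"
    using g lin_on_sum_pairs_scale[of "\<lambda>r s. r * s" "\<lambda>z. g (mult z b)" dual_basis "\<lambda>\<mu> m. m" "\<lambda>\<mu> m. \<mu> a"]
    by (simp add: dual_carrier_iff lin_functional_mult_left)
  finally show "(\<Sum>(u, v)\<leftarrow>map (\<lambda>(\<mu>, m). (\<mu>, \<lambda>b. g (mult m b))) dual_basis. u a * v b) = g (mult a b)"
    by (simp add: o_def split_def)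
qed

lemma dual_comult_in:
  assumes "g \<in> Hd" "(u, v) \<in> set (dcomult g)"
  shows "u \<in> Hd" "v \<in> Hd"
  using someI_ex[OF dual_comult_exists[OF assms(1)]] assms(2) unfolding dual_comult_def by auto

lemma dual_comult_memD: "(u, v) \<in> set (dcomult g) \<Longrightarrow> g \<in> Hd \<Longrightarrow> u \<in> Hd \<and> v \<in> Hd"
  using dual_comult_in by blast

lemma dual_comult_eval: "g \<in> Hd \<Longrightarrow> sweedler dcomult g (\<lambda>u v. u a * v b) = g (mult a b)"
  using someI_ex[OF dual_comult_exists] unfolding dual_comult_def sweedler_def by auto

lemma tensor_eq2_dual:
  assumes "\<forall>w\<in>set xs \<union> set ys. length w = 2 \<and> set w \<subseteq> Hd"
    and "\<And>x y. (\<Sum>w\<leftarrow>xs. (w ! 0) x * (w ! Suc 0) y) = (\<Sum>w\<leftarrow>ys. (w ! 0) x * (w ! Suc 0) y)"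
  shows "tensor_eq dual_scale Hd 2 xs ys"
  by (rule dual.tensor_eq2_by_coordinates[OF dual_basis_on_dual assms(1)]) (auto simp: assms(2))

lemma tensor_eq3_dual:
  assumes "\<forall>w\<in>set xs \<union> set ys. length w = 3 \<and> set w \<subseteq> Hd"
    and "\<And>x y z. (\<Sum>w\<leftarrow>xs. (w ! 0) x * (w ! Suc 0) y * (w ! Suc (Suc 0)) z) =
                  (\<Sum>w\<leftarrow>ys. (w ! 0) x * (w ! Suc 0) y * (w ! Suc (Suc 0)) z)"
  shows "tensor_eq dual_scale Hd 3 xs ys"
  by (rule dual.tensor_eq3_by_coordinates[OF dual_basis_on_dual assms(1)]) (auto simp: assms(2))

lemma sum_list_tens2_eval: "(\<Sum>w\<leftarrow>tens2 L. (w ! 0) x * (w ! Suc 0) y) = (\<Sum>(g, h)\<leftarrow>L. g x * h y)"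
  by (rule sum_list_tens2)

end

context fgp_bialgebra_dual
begin

lemma lin_on_dual_mult_right: "lin_on dual_scale Hd dual_scale (dmult a)"
  unfolding lin_on_def
  by (auto simp: fun_eq_iff dual_mult_apply dual_scale_def sweedler_mult_left distrib_left
      sweedler_add[symmetric] mult.left_commute)

lemma lin_on_dual_mult_left: "lin_on dual_scale Hd dual_scale (\<lambda>a. dmult a b)"
  unfolding lin_on_def
  by (auto simp: fun_eq_iff dual_mult_apply dual_scale_def sweedler_mult_left distrib_right
      sweedler_add[symmetric] mult.assoc)

lemma dual_mult_assoc:
  assumes "a \<in> Hd" "b \<in> Hd" "c \<in> Hd"
  shows "dmult (dmult a b) c = dmult a (dmult b c)"
proof
  fix x
  have T: "trilinear_on sc UNIV (\<lambda>p q r. a p * b q * c r)"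
    using assms by (intro trilinear_on_prod) (simp_all add: dual_carrier_iff)
  have "dmult (dmult a b) c x = sweedler comult x (\<lambda>x1 x2. sweedler comult x1 (\<lambda>y1 y2. a y1 * b y2 * c x2))"
    by (simp add: dual_mult_apply sweedler_mult_right)
  also have "\<dots> = sweedler comult x (\<lambda>x1 x2. sweedler comult x2 (\<lambda>z1 z2. a x1 * b z1 * c z2))"
    using comult_coassoc[OF _ T] by simp
  also have "\<dots> = dmult a (dmult b c) x"
    by (simp add: dual_mult_apply sweedler_mult_left mult.assoc)
  finally show "dmult (dmult a b) c x = dmult a (dmult b c) x" .
qed

lemma dual_mult_counit:
  assumes a: "a \<in> Hd"
  shows "dmult counit a = a" "dmult a counit = a"
proof -
  have "dmult counit a x = a (sweedler comult x (\<lambda>x1 x2. sc (counit x1) x2))" for x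
    using a lin_on_sweedler_scale[of "\<lambda>r s. r * s" a comult x "\<lambda>x1 x2. x2" "\<lambda>x1 x2. counit x1"]
    by (simp add: dual_mult_apply dual_carrier_iff)
  then show "dmult counit a = a" by (simp add: fun_eq_iff counit_left)
  have "dmult a counit x = a (sweedler comult x (\<lambda>x1 x2. sc (counit x2) x1))" for x
    using a lin_on_sweedler_scale[of "\<lambda>r s. r * s" a comult x "\<lambda>x1 x2. x1" "\<lambda>x1 x2. counit x2"]
    by (simp add: dual_mult_apply dual_carrier_iff mult.commute)
  then show "dmult a counit = a" by (simp add: fun_eq_iff counit_right)
qed

lemma dual_comult_add:
  assumes "a \<in> Hd" "b \<in> Hd"
  shows "tensor_eq dual_scale Hd 2 (tens2 (dcomult (a + b))) (tens2 (dcomult a @ dcomult b))"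
proof (rule tensor_eq2_dual)
  have "a + b \<in> Hd" using assms by simp
  then show "\<forall>w\<in>set (tens2 (dcomult (a + b))) \<union> set (tens2 (dcomult a @ dcomult b)). length w = 2 \<and> set w \<subseteq> Hd"
    using assms by (auto simp: tens2_def dest: dual_comult_memD)
  fix x y
  show "(\<Sum>w\<leftarrow>tens2 (dcomult (a + b)). (w ! 0) x * (w ! Suc 0) y) =
      (\<Sum>w\<leftarrow>tens2 (dcomult a @ dcomult b). (w ! 0) x * (w ! Suc 0) y)"
    using dual_comult_eval[OF \<open>a + b \<in> Hd\<close>] dual_comult_eval[OF assms(1)] dual_comult_eval[OF assms(2)]
    by (simp add: tens2_append sum_list_tens2_eval sweedler_def)
qed

lemma dual_comult_scale:
  assumes a: "a \<in> Hd"
  shows "tensor_eq dual_scale Hd 2 (tens2 (dcomult (dual_scale r a))) (map (\<lambda>(x, y). [dual_scale r x, y]) (dcomult a))"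
proof (rule tensor_eq2_dual)
  have ra: "dual_scale r a \<in> Hd" using a by simp
  then show "\<forall>w\<in>set (tens2 (dcomult (dual_scale r a))) \<union> set (map (\<lambda>(x, y). [dual_scale r x, y]) (dcomult a)).
      length w = 2 \<and> set w \<subseteq> Hd"
    using a by (fastforce simp: tens2_def dest: dual_comult_memD)
  fix x y
  have "(\<Sum>w\<leftarrow>map (\<lambda>(x, y). [dual_scale r x, y]) (dcomult a). (w ! 0) x * (w ! Suc 0) y) =
      r * sweedler dcomult a (\<lambda>u v. u x * v y)"
    by (simp add: sweedler_def o_def split_def dual_scale_def sum_list_const_mult[symmetric] mult.assoc)
  then show "(\<Sum>w\<leftarrow>tens2 (dcomult (dual_scale r a)). (w ! 0) x * (w ! Suc 0) y) =
      (\<Sum>w\<leftarrow>map (\<lambda>(x, y). [dual_scale r x, y]) (dcomult a). (w ! 0) x * (w ! Suc 0) y)"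
    using dual_comult_eval[OF ra] dual_comult_eval[OF a] by (simp add: sum_list_tens2_eval sweedler_def dual_scale_def)
qed

lemma sum_list_concat3_left:
  fixes L :: "(('a \<Rightarrow> 'k::comm_ring_1) \<times> ('a \<Rightarrow> 'k)) list"
  shows "(\<Sum>w\<leftarrow>concat (map (\<lambda>(a1, a2). map (\<lambda>(b1, b2). [b1, b2, a2]) (G a1)) L). (w ! 0) x * (w ! Suc 0) y * (w ! Suc (Suc 0)) z)
    = (\<Sum>(a1, a2)\<leftarrow>L. (\<Sum>(b1, b2)\<leftarrow>G a1. b1 x * b2 y) * a2 z)"
  by (simp add: sum_list_concat_map o_def split_def sum_list_mult_const)

lemma sum_list_concat3_right:
  fixes L :: "(('a \<Rightarrow> 'k::comm_ring_1) \<times> ('a \<Rightarrow> 'k)) list"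
  shows "(\<Sum>w\<leftarrow>concat (map (\<lambda>(a1, a2). map (\<lambda>(c1, c2). [a1, c1, c2]) (G a2)) L). (w ! 0) x * (w ! Suc 0) y * (w ! Suc (Suc 0)) z)
    = (\<Sum>(a1, a2)\<leftarrow>L. a1 x * (\<Sum>(c1, c2)\<leftarrow>G a2. c1 y * c2 z))"
  by (simp add: sum_list_concat_map o_def split_def sum_list_const_mult mult.assoc)

lemma dual_comult_coassoc:
  assumes a: "a \<in> Hd"
  shows "tensor_eq dual_scale Hd 3
        (concat (map (\<lambda>(a1, a2). map (\<lambda>(b1, b2). [b1, b2, a2]) (dcomult a1)) (dcomult a)))
        (concat (map (\<lambda>(a1, a2). map (\<lambda>(c1, c2). [a1, c1, c2]) (dcomult a2)) (dcomult a)))"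
proof (rule tensor_eq3_dual)
  show "\<forall>w\<in>set (concat (map (\<lambda>(a1, a2). map (\<lambda>(b1, b2). [b1, b2, a2]) (dcomult a1)) (dcomult a))) \<union>
      set (concat (map (\<lambda>(a1, a2). map (\<lambda>(c1, c2). [a1, c1, c2]) (dcomult a2)) (dcomult a))). length w = 3 \<and> set w \<subseteq> Hd"
    using a by (fastforce dest: dual_comult_memD)
  fix x y z
  have "(\<Sum>w\<leftarrow>concat (map (\<lambda>(a1, a2). map (\<lambda>(b1, b2). [b1, b2, a2]) (dcomult a1)) (dcomult a)).
          (w ! 0) x * (w ! Suc 0) y * (w ! Suc (Suc 0)) z)
      = sweedler dcomult a (\<lambda>a1 a2. sweedler dcomult a1 (\<lambda>b1 b2. b1 x * b2 y) * a2 z)"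
    unfolding sum_list_concat3_left sweedler_def ..
  also have "\<dots> = a (mult (mult x y) z)"
    using a by (simp add: sweedler_cong[of dcomult a _ "\<lambda>a1 a2. a1 (mult x y) * a2 z"] dual_comult_eval dual_comult_memD)
  also have "\<dots> = sweedler dcomult a (\<lambda>a1 a2. a1 x * sweedler dcomult a2 (\<lambda>c1 c2. c1 y * c2 z))"
    using a by (simp add: mult_assoc sweedler_cong[of dcomult a _ "\<lambda>a1 a2. a1 x * a2 (mult y z)"] dual_comult_eval dual_comult_memD)
  also have "\<dots> = (\<Sum>w\<leftarrow>concat (map (\<lambda>(a1, a2). map (\<lambda>(c1, c2). [a1, c1, c2]) (dcomult a2)) (dcomult a)).
          (w ! 0) x * (w ! Suc 0) y * (w ! Suc (Suc 0)) z)"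
    unfolding sum_list_concat3_right sweedler_def ..
  finally show "(\<Sum>w\<leftarrow>concat (map (\<lambda>(a1, a2). map (\<lambda>(b1, b2). [b1, b2, a2]) (dcomult a1)) (dcomult a)).
          (w ! 0) x * (w ! Suc 0) y * (w ! Suc (Suc 0)) z) =
      (\<Sum>w\<leftarrow>concat (map (\<lambda>(a1, a2). map (\<lambda>(c1, c2). [a1, c1, c2]) (dcomult a2)) (dcomult a)).
          (w ! 0) x * (w ! Suc 0) y * (w ! Suc (Suc 0)) z)" .
qed

lemma dual_counit_left:
  "a \<in> Hd \<Longrightarrow> (\<Sum>(x, y)\<leftarrow>dcomult a. dual_scale (dual_counit one x) y) = a"
  using dual_comult_eval[of a one]
  by (simp add: fun_eq_iff sum_list_map_apply split_def dual_scale_def dual_counit_def sweedler_def)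

lemma dual_counit_right:
  "a \<in> Hd \<Longrightarrow> (\<Sum>(x, y)\<leftarrow>dcomult a. dual_scale (dual_counit one y) x) = a"
  using dual_comult_eval[of a _ one]
  by (simp add: fun_eq_iff sum_list_map_apply split_def dual_scale_def dual_counit_def sweedler_def mult.commute)

lemma sum_list_concat2:
  fixes F :: "'b \<Rightarrow> 'c \<Rightarrow> 'x \<Rightarrow> 'k::comm_ring_1"
  shows "(\<Sum>w\<leftarrow>concat (map (\<lambda>(a1, a2). map (\<lambda>(b1, b2). [F a1 b1, F a2 b2]) M) L). (w ! 0) x * (w ! Suc 0) y)
    = (\<Sum>(a1, a2)\<leftarrow>L. \<Sum>(b1, b2)\<leftarrow>M. F a1 b1 x * F a2 b2 y)"
  by (simp add: sum_list_concat_map o_def split_def)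

lemma dual_comult_eval_mult:
  assumes a: "a \<in> Hd" and b: "b \<in> Hd"
  shows "a (mult x1 y1) * b (mult x2 y2) =
      sweedler dcomult a (\<lambda>a1 a2. sweedler dcomult b (\<lambda>b1 b2. (a1 x1 * b1 x2) * (a2 y1 * b2 y2)))"
proof -
  have "a (mult x1 y1) * b (mult x2 y2) =
      sweedler dcomult a (\<lambda>a1 a2. a1 x1 * a2 y1) * sweedler dcomult b (\<lambda>b1 b2. b1 x2 * b2 y2)"
    using dual_comult_eval[OF a] dual_comult_eval[OF b] by simp
  also have "\<dots> = sweedler dcomult a (\<lambda>a1 a2. sweedler dcomult b (\<lambda>b1 b2. (a1 x1 * a2 y1) * (b1 x2 * b2 y2)))"
    by (subst sweedler_mult_right) (simp add: sweedler_mult_left)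
  finally show ?thesis by (simp add: ac_simps)
qed

lemma dual_comult_mult:
  assumes a: "a \<in> Hd" and b: "b \<in> Hd"
  shows "tensor_eq dual_scale Hd 2 (tens2 (dcomult (dmult a b)))
        (concat (map (\<lambda>(a1, a2). map (\<lambda>(b1, b2). [dmult a1 b1, dmult a2 b2]) (dcomult b)) (dcomult a)))"
proof (rule tensor_eq2_dual)
  have ab: "dmult a b \<in> Hd" by (rule dual_mult_in[OF a b])
  then show "\<forall>w\<in>set (tens2 (dcomult (dmult a b))) \<union>
      set (concat (map (\<lambda>(a1, a2). map (\<lambda>(b1, b2). [dmult a1 b1, dmult a2 b2]) (dcomult b)) (dcomult a))).
        length w = 2 \<and> set w \<subseteq> Hd"
    using a b by (fastforce simp: tens2_def intro: dual_mult_in dest: dual_comult_memD)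
  fix x y
  have prod: "dmult a1 b1 x * dmult a2 b2 y =
      sweedler comult x (\<lambda>x1 x2. sweedler comult y (\<lambda>y1 y2. (a1 x1 * b1 x2) * (a2 y1 * b2 y2)))" for a1 b1 a2 b2
    unfolding dual_mult_apply by (subst sweedler_mult_right) (simp add: sweedler_mult_left)
  have B: "bilinear_on sc UNIV (\<lambda>p q. a p * b q)"
    using a b by (intro bilinear_on_prod) (simp_all add: dual_carrier_iff)
  have "(\<Sum>w\<leftarrow>tens2 (dcomult (dmult a b)). (w ! 0) x * (w ! Suc 0) y) = dmult a b (mult x y)"
    using dual_comult_eval[OF ab] by (simp add: sum_list_tens2_eval sweedler_def)
  also have "\<dots> = sweedler comult x (\<lambda>x1 x2. sweedler comult y (\<lambda>y1 y2. a (mult x1 y1) * b (mult x2 y2)))"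
    using comult_mult[OF _ _ B] by (simp add: dual_mult_apply)
  also have "\<dots> = sweedler comult x (\<lambda>x1 x2. sweedler comult y (\<lambda>y1 y2.
      sweedler dcomult a (\<lambda>a1 a2. sweedler dcomult b (\<lambda>b1 b2. (a1 x1 * b1 x2) * (a2 y1 * b2 y2)))))"
    by (simp add: dual_comult_eval_mult[OF a b])
  also have "\<dots> = sweedler dcomult a (\<lambda>a1 a2. sweedler dcomult b (\<lambda>b1 b2. dmult a1 b1 x * dmult a2 b2 y))"
    unfolding prod by (rule sweedler_swap4)
  also have "\<dots> = (\<Sum>w\<leftarrow>concat (map (\<lambda>(a1, a2). map (\<lambda>(b1, b2). [dmult a1 b1, dmult a2 b2]) (dcomult b)) (dcomult a)).
      (w ! 0) x * (w ! Suc 0) y)"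
    unfolding sum_list_concat2 sweedler_def ..
  finally show "(\<Sum>w\<leftarrow>tens2 (dcomult (dmult a b)). (w ! 0) x * (w ! Suc 0) y) =
      (\<Sum>w\<leftarrow>concat (map (\<lambda>(a1, a2). map (\<lambda>(b1, b2). [dmult a1 b1, dmult a2 b2]) (dcomult b)) (dcomult a)).
      (w ! 0) x * (w ! Suc 0) y)" .
qed

lemma dual_comult_counit: "tensor_eq dual_scale Hd 2 (tens2 (dcomult counit)) [[counit, counit]]"
proof (rule tensor_eq2_dual)
  show "\<forall>w\<in>set (tens2 (dcomult counit)) \<union> set [[counit, counit]]. length w = 2 \<and> set w \<subseteq> Hd"
    using counit_in_dual by (fastforce simp: tens2_def dest: dual_comult_memD)
  fix x y
  show "(\<Sum>w\<leftarrow>tens2 (dcomult counit). (w ! 0) x * (w ! Suc 0) y) = (\<Sum>w\<leftarrow>[[counit, counit]]. (w ! 0) x * (w ! Suc 0) y)"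
    using dual_comult_eval[OF counit_in_dual] by (simp add: sum_list_tens2_eval sweedler_def counit_mult)
qed

lemma dual_counit_mult: "a \<in> Hd \<Longrightarrow> b \<in> Hd \<Longrightarrow> dual_counit one (dmult a b) = dual_counit one a * dual_counit one b"
  using comult_one[OF bilinear_on_prod[of sc UNIV a b]]
  by (simp add: dual_counit_def dual_mult_apply dual_carrier_iff)

lemma lin_functional_dual_counit: "lin_functional dual_scale Hd (dual_counit one)"
  by (simp add: lin_on_def dual_counit_def dual_scale_def)

lemma dual_counit_one: "dual_counit one counit = 1"
  by (simp add: dual_counit_def counit_one)

theorem bialgebra_dual: "bialgebra dual_scale Hd dmult (dual_one UNIV counit) dcomult (dual_counit one)"
  unfolding bialgebra_def dual_one_eq
  by (auto simp: module_on_dual dual_mult_in counit_in_dual lin_on_dual_mult_right lin_on_dual_mult_left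
      dual_mult_assoc dual_mult_counit dual_comult_add dual_comult_scale dual_comult_coassoc
      lin_functional_dual_counit dual_counit_left dual_counit_right dual_comult_mult dual_comult_counit
      dual_counit_mult dual_counit_one dest: dual_comult_memD)

theorem fin_gen_proj_dual: "fin_gen_proj dual_scale Hd"
proof -
  define n where "n = length dual_basis"
  define \<mu> where "\<mu> j = fst (dual_basis ! j)" for j
  define m where "m j = snd (dual_basis ! j)" for j
  define p :: "(nat \<Rightarrow> 'k) \<Rightarrow> ('a \<Rightarrow> 'k)" where "p v = (\<Sum>j\<leftarrow>[0..<n]. dual_scale (v j) (\<mu> j))" for v
  define i :: "('a \<Rightarrow> 'k) \<Rightarrow> nat \<Rightarrow> 'k" where "i g = (\<lambda>j. if j < n then g (m j) else 0)" for g
  have \<mu>_in: "j < n \<Longrightarrow> \<mu> j \<in> Hd" for j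
    using dual_basis_in_dual[of "\<mu> j" "m j"] nth_mem[of j dual_basis] by (simp add: n_def \<mu>_def m_def)
  have p_apply: "p v x = (\<Sum>j\<leftarrow>[0..<n]. v j * \<mu> j x)" for v x
    by (simp add: p_def sum_list_map_apply dual_scale_def)
  show ?thesis
    unfolding fin_gen_proj_def
  proof (intro exI conjI)
    show "lin_on kn_scale (kn n) dual_scale p"
      unfolding lin_on_def
      by (auto simp: fun_eq_iff p_apply kn_scale_def dual_scale_def distrib_right sum_list_addf
          sum_list_const_mult[symmetric] mult.assoc)
    show "p ` kn n \<subseteq> Hd" unfolding p_def using \<mu>_in by (auto intro!: dual.sum_list_map_in)
    show "lin_on dual_scale Hd kn_scale i"
      unfolding lin_on_def by (auto simp: fun_eq_iff i_def kn_scale_def dual_scale_def)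
    show "i ` Hd \<subseteq> kn n" by (auto simp: i_def kn_def)
    show "\<forall>g\<in>Hd. p (i g) = g"
    proof
      fix g assume g: "g \<in> Hd"
      have "p (i g) = (\<Sum>j\<leftarrow>[0..<length dual_basis]. dual_scale (g (snd (dual_basis ! j))) (fst (dual_basis ! j)))"
        unfolding p_def i_def n_def \<mu>_def m_def by (intro sum_list_map_cong) auto
      also have "\<dots> = g"
        using dual_expand[OF g] by (simp add: sum_list_map_nth[where F = "\<lambda>q. dual_scale (g (snd q)) (fst q)"] split_def)
      finally show "p (i g) = g" .
    qed
  qed
qed

end

section \<open>From H to its dual\<close>

lemma FH_algebra_imp_fh_structure:
  assumes "FH_algebra sc S mult one comult counit"
  obtains f xys where "fh_structure sc S mult one comult counit f xys"
proof -
  have B: "bialgebra sc S mult one comult counit" and P: "fin_gen_proj sc S"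
    using assms by (simp_all add: FH_algebra_def)
  obtain f xys where "lin_functional sc S f" "\<forall>(x, y) \<in> set xys. x \<in> S \<and> y \<in> S"
    "\<forall>a\<in>S. (\<Sum>(x, y)\<leftarrow>xys. sc (f (mult y a)) x) = a" "\<forall>a\<in>S. (\<Sum>(x, y)\<leftarrow>xys. sc (f (mult a x)) y) = a"
    "\<forall>a\<in>S. (\<Sum>(a1, a2)\<leftarrow>comult a. sc (f a1) a2) = sc (f a) one"
    using assms unfolding FH_algebra_def by blast
  then have "fh_structure sc S mult one comult counit f xys"
    by (intro fh_structure.intro fgp_bialgebraI[OF B P] fh_structure_axioms.intro) (auto simp: sweedler_def)
  then show ?thesis by (rule that)
qed

lemma fh_structure_imp_FH_algebra:
  assumes "fh_structure sc S mult one comult counit f xys"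
    and "bialgebra sc S mult one comult counit" "fin_gen_proj sc S"
  shows "FH_algebra sc S mult one comult counit"
proof -
  interpret fh_structure sc S mult one comult counit f xys by (rule assms(1))
  show ?thesis
    unfolding FH_algebra_def
    using assms(2,3) lin_functional_f frobenius_pairs_in frobenius_left frobenius_right f_right_integral
    by (intro conjI exI[of _ f] exI[of _ xys]) (auto simp: sweedler_def)
qed

context fh_structure
begin

lemma functional_eq_f_mult:
  assumes g: "lin_functional sc S g" and b: "b \<in> S"
  shows "g b = f (mult b (\<Sum>(x, y)\<leftarrow>xys. sc (g y) x))"
proof -
  have "f (mult b (\<Sum>(x, y)\<leftarrow>xys. sc (g y) x)) = (\<Sum>(x, y)\<leftarrow>xys. g y * f (mult b x))"
    using b frobenius_pairs_in
    by (simp add: lin_on_sum_pairs_scale[OF lin_functional_mult_right[OF lin_functional_f b]])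
  also have "\<dots> = g (\<Sum>(x, y)\<leftarrow>xys. sc (f (mult b x)) y)"
    using frobenius_pairs_in by (simp add: lin_on_sum_pairs_scale[OF g] mult.commute)
  also have "\<dots> = g b" using frobenius_right[OF b] by simp
  finally show ?thesis by simp
qed

end

locale fh_univ = fgp_bialgebra_dual sc mult one comult counit +
  fh_structure sc UNIV mult one comult counit f xys
  for sc :: "'k::comm_ring_1 \<Rightarrow> 'a::ab_group_add \<Rightarrow> 'a" and mult one comult counit f xys
begin

definition dual_frobenius_hom :: "('a \<Rightarrow> 'k) \<Rightarrow> 'k" where
  "dual_frobenius_hom g = g right_integral"

definition dual_frobenius_pairs :: "(('a \<Rightarrow> 'k) \<times> ('a \<Rightarrow> 'k)) list" where
  "dual_frobenius_pairs = map (\<lambda>(\<mu>, m). (\<mu>, \<lambda>b. f (mult b (antipode' m)))) dual_basis"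

lemma dual_frobenius_hom_mult:
  assumes "g \<in> Hd"
  shows "dual_frobenius_hom (dmult (\<lambda>b. f (mult b c)) g) = g (antipode c)"
  using assms lin_on_sweedler_scale[of "\<lambda>r s. r * s" g comult right_integral "\<lambda>u v. v" "\<lambda>u v. f (mult u c)"]
  by (simp add: dual_frobenius_hom_def dual_mult_apply antipode_def dual_carrier_iff)

lemma dual_frobenius_pairs_in: "(x, y) \<in> set dual_frobenius_pairs \<Longrightarrow> x \<in> Hd \<and> y \<in> Hd"
  using lin_functional_mult_left[OF lin_functional_f]
  by (auto simp: dual_frobenius_pairs_def dual_basis_functional dual_carrier_iff)

lemma dual_frobenius_left:
  assumes g: "g \<in> Hd"
  shows "(\<Sum>(x, y)\<leftarrow>dual_frobenius_pairs. dual_scale (dual_frobenius_hom (dmult y g)) x) = g"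
proof -
  have "(\<Sum>(x, y)\<leftarrow>dual_frobenius_pairs. dual_scale (dual_frobenius_hom (dmult y g)) x) =
      (\<Sum>(\<mu>, m)\<leftarrow>dual_basis. dual_scale (g (antipode (antipode' m))) \<mu>)"
    unfolding dual_frobenius_pairs_def sum_list_map_pairs by (simp add: dual_frobenius_hom_mult[OF g])
  also have "\<dots> = g" using dual_expand[OF g] by (simp add: antipode_antipode')
  finally show ?thesis .
qed

lemma dual_frobenius_right:
  assumes g: "g \<in> Hd"
  shows "(\<Sum>(x, y)\<leftarrow>dual_frobenius_pairs. dual_scale (dual_frobenius_hom (dmult g x)) y) = g"
proof
  fix b
  define c where "c = (\<Sum>(x, y)\<leftarrow>xys. sc (g y) x)"
  have g_eq: "g = (\<lambda>b. f (mult b c))"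
    using functional_eq_f_mult g by (auto simp: c_def dual_carrier_iff)
  have lin: "lin_functional sc UNIV (\<lambda>z. f (mult b (antipode' z)))"
    by (rule lin_on_compose[OF lin_on_antipode' _ lin_functional_mult_right[OF lin_functional_f]]) simp_all
  have "(\<Sum>(x, y)\<leftarrow>dual_frobenius_pairs. dual_scale (dual_frobenius_hom (dmult g x)) y) b =
      (\<Sum>(\<mu>, m)\<leftarrow>dual_basis. \<mu> (antipode c) * f (mult b (antipode' m)))"
    unfolding dual_frobenius_pairs_def sum_list_map_pairs sum_list_map_apply
    by (intro sum_list_map_cong) (auto simp: g_eq dual_frobenius_hom_mult dual_basis_in_dual dual_scale_def)
  also have "\<dots> = f (mult b (antipode' (\<Sum>(\<mu>, m)\<leftarrow>dual_basis. sc (\<mu> (antipode c)) m)))"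
    by (simp add: lin_on_sum_pairs_scale[OF lin])
  also have "\<dots> = g b" by (simp add: dual_basis_expand antipode'_antipode g_eq)
  finally show "(\<Sum>(x, y)\<leftarrow>dual_frobenius_pairs. dual_scale (dual_frobenius_hom (dmult g x)) y) b = g b" .
qed

lemma dual_frobenius_hom_right_integral:
  assumes g: "g \<in> Hd"
  shows "sweedler dcomult g (\<lambda>x y. dual_scale (dual_frobenius_hom x) y) =
      dual_scale (dual_frobenius_hom g) (dual_one UNIV counit)"
proof
  fix b
  have "sweedler dcomult g (\<lambda>x y. dual_scale (dual_frobenius_hom x) y) b = g (mult right_integral b)"
    using dual_comult_eval[OF g, of right_integral b]
    by (simp add: sweedler_def sum_list_map_apply split_def dual_scale_def dual_frobenius_hom_def)
  also have "\<dots> = dual_scale (dual_frobenius_hom g) (dual_one UNIV counit) b"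
    using g by (simp add: right_integral_mult dual_carrier_iff lin_onD_scale dual_scale_def
        dual_frobenius_hom_def dual_one_eq mult.commute)
  finally show "sweedler dcomult g (\<lambda>x y. dual_scale (dual_frobenius_hom x) y) b =
      dual_scale (dual_frobenius_hom g) (dual_one UNIV counit) b" .
qed

theorem FH_algebra_dual: "FH_algebra dual_scale Hd dmult (dual_one UNIV counit) dcomult (dual_counit one)"
proof (rule fh_structure_imp_FH_algebra[OF _ bialgebra_dual fin_gen_proj_dual])
  show "fh_structure dual_scale Hd dmult (dual_one UNIV counit) dcomult (dual_counit one)
      dual_frobenius_hom dual_frobenius_pairs"
  proof (intro fh_structure.intro fgp_bialgebraI[OF bialgebra_dual fin_gen_proj_dual] fh_structure_axioms.intro)
    show "lin_functional dual_scale Hd dual_frobenius_hom"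
      by (simp add: lin_on_def dual_scale_def dual_frobenius_hom_def)
  qed (simp_all add: dual_frobenius_pairs_in dual_frobenius_left dual_frobenius_right dual_frobenius_hom_right_integral)
qed

end

section \<open>From the dual back to H\<close>

locale dual_fh = fgp_bialgebra_dual sc mult one comult counit +
  D: fh_structure dual_scale "dual_carrier sc UNIV" "dual_mult UNIV comult" "dual_one UNIV counit"
    "dual_comult sc UNIV mult" "dual_counit one" \<Phi> XY
  for sc :: "'k::comm_ring_1 \<Rightarrow> 'a::ab_group_add \<Rightarrow> 'a" and mult one comult counit \<Phi> XY
begin

abbreviation T :: "'a \<Rightarrow> 'k" where "T \<equiv> D.right_integral"

definition frobenius_map :: "'a \<Rightarrow> 'a \<Rightarrow> 'k" where
  "frobenius_map a = (\<lambda>b. T (mult a b))"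

definition phi_point :: 'a where
  "phi_point = (\<Sum>(\<mu>, m)\<leftarrow>dual_basis. sc (\<Phi> \<mu>) m)"

definition contract :: "('a \<Rightarrow> 'k) \<Rightarrow> 'a" where
  "contract h = sweedler comult phi_point (\<lambda>x y. sc (h y) x)"

definition represent :: "(('a \<Rightarrow> 'k) \<Rightarrow> 'k) \<Rightarrow> 'a \<Rightarrow> 'k" where
  "represent \<Xi> = (\<Sum>(X, Y)\<leftarrow>XY. dual_scale (\<Xi> Y) X)"

lemma T_in_dual: "T \<in> Hd"
  by (rule D.right_integral_in)

lemma frobenius_map_in: "frobenius_map a \<in> Hd"
  using T_in_dual by (simp add: frobenius_map_def dual_carrier_iff lin_functional_mult_right)

lemma Phi_eq_eval: "u \<in> Hd \<Longrightarrow> \<Phi> u = u phi_point"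
proof -
  assume u: "u \<in> Hd"
  have "\<Phi> u = \<Phi> (\<Sum>(\<mu>, m)\<leftarrow>dual_basis. dual_scale (u m) \<mu>)" using dual_expand[OF u] by simp
  also have "\<dots> = (\<Sum>(\<mu>, m)\<leftarrow>dual_basis. u m * \<Phi> \<mu>)"
    by (rule dual.lin_on_sum_pairs_scale[OF D.lin_functional_f]) (rule dual_basis_in_dual)
  also have "\<dots> = u phi_point"
    using u lin_on_sum_pairs_scale[of "\<lambda>r s. r * s" u dual_basis "\<lambda>\<mu> m. m" "\<lambda>\<mu> m. \<Phi> \<mu>"]
    by (simp add: phi_point_def dual_carrier_iff mult.commute)
  finally show ?thesis .
qed

lemma antipode_dual_eq:
  assumes h: "h \<in> Hd"
  shows "D.antipode h = frobenius_map (contract h)"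
proof
  fix b
  have "D.antipode h b = sweedler dcomult T (\<lambda>u v. \<Phi> (dmult u h) * v b)"
    unfolding D.antipode_def by (simp add: sweedler_def sum_list_map_apply split_def dual_scale_def)
  also have "\<dots> = sweedler dcomult T (\<lambda>u v. u (contract h) * v b)"
  proof (rule sweedler_cong)
    fix u v assume "(u, v) \<in> set (dcomult T)"
    then have u: "u \<in> Hd" using T_in_dual by (auto dest: dual_comult_memD)
    have "\<Phi> (dmult u h) = sweedler comult phi_point (\<lambda>x y. h y * u x)"
      using Phi_eq_eval[OF dual_mult_in[OF u h]] by (simp add: dual_mult_apply mult.commute)
    also have "\<dots> = u (contract h)"
      unfolding contract_def using u lin_on_sweedler_scale[of "\<lambda>r s. r * s" u comult phi_point "\<lambda>x y. x" "\<lambda>x y. h y"]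
      by (simp add: dual_carrier_iff)
    finally show "\<Phi> (dmult u h) * v b = u (contract h) * v b" by simp
  qed
  also have "\<dots> = frobenius_map (contract h) b"
    by (simp add: dual_comult_eval[OF T_in_dual] frobenius_map_def)
  finally show "D.antipode h b = frobenius_map (contract h) b" .
qed

lemma represent_in: "represent \<Xi> \<in> Hd"
  unfolding represent_def by (rule dual.sum_pairs_in) (simp add: D.frobenius_pairs_in)

lemma Phi_mult_represent:
  assumes \<Xi>: "lin_functional dual_scale Hd \<Xi>" and u: "u \<in> Hd"
  shows "\<Phi> (dmult u (represent \<Xi>)) = \<Xi> u"
proof -
  have "\<Phi> (dmult u (represent \<Xi>)) = \<Phi> (\<Sum>(X, Y)\<leftarrow>XY. dual_scale (\<Xi> Y) (dmult u X))"
    unfolding represent_def using D.frobenius_pairs_in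
    by (subst dual.lin_on_sum_pairs_scale[OF lin_on_dual_mult_right]) auto
  also have "\<dots> = (\<Sum>(X, Y)\<leftarrow>XY. \<Phi> (dmult u X) * \<Xi> Y)"
    using D.frobenius_pairs_in u
    by (subst dual.lin_on_sum_pairs_scale[OF D.lin_functional_f]) (auto simp: dual_mult_in mult.commute)
  also have "\<dots> = \<Xi> (\<Sum>(X, Y)\<leftarrow>XY. dual_scale (\<Phi> (dmult u X)) Y)"
    using D.frobenius_pairs_in by (subst dual.lin_on_sum_pairs_scale[OF \<Xi>]) auto
  also have "\<dots> = \<Xi> u" using D.frobenius_right[OF u] by simp
  finally show ?thesis .
qed

lemma lin_functional_eval: "lin_functional dual_scale Hd (\<lambda>u. u a)"
  by (simp add: lin_on_def dual_scale_def)

lemma antipode_represent_eval: "D.antipode (represent (\<lambda>u. u a)) = frobenius_map a"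
proof
  fix b
  have "D.antipode (represent (\<lambda>u. u a)) b = sweedler dcomult T (\<lambda>u v. \<Phi> (dmult u (represent (\<lambda>u. u a))) * v b)"
    unfolding D.antipode_def by (simp add: sweedler_def sum_list_map_apply split_def dual_scale_def)
  also have "\<dots> = sweedler dcomult T (\<lambda>u v. u a * v b)"
    using T_in_dual
    by (intro sweedler_cong) (auto dest: dual_comult_memD simp: Phi_mult_represent[OF lin_functional_eval])
  also have "\<dots> = frobenius_map a b" by (simp add: dual_comult_eval[OF T_in_dual] frobenius_map_def)
  finally show "D.antipode (represent (\<lambda>u. u a)) b = frobenius_map a b" .
qed

lemma frobenius_map_inj:
  assumes "frobenius_map x = frobenius_map y"
  shows "x = y"
proof (rule dual_basis_ext)
  have "D.antipode' (D.antipode (represent (\<lambda>u. u x))) = D.antipode' (D.antipode (represent (\<lambda>u. u y)))"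
    using assms by (simp add: antipode_represent_eval)
  then have R: "represent (\<lambda>u. u x) = represent (\<lambda>u. u y)"
    by (simp add: D.antipode'_antipode represent_in)
  fix \<mu> m assume "(\<mu>, m) \<in> set dual_basis"
  then have "\<mu> \<in> Hd" by (rule dual_basis_in_dual)
  then show "\<mu> x = \<mu> y"
    using Phi_mult_represent[OF lin_functional_eval, of \<mu> x] Phi_mult_represent[OF lin_functional_eval, of \<mu> y] R
    by simp
qed

lemma frobenius_map_contract: "h \<in> Hd \<Longrightarrow> frobenius_map (contract (D.antipode' h)) = h"
  by (simp add: antipode_dual_eq[symmetric] D.antipode_antipode')

lemma T_mult_contract: "h \<in> Hd \<Longrightarrow> T (mult (contract (D.antipode' h)) b) = h b"
  using frobenius_map_contract[of h] by (simp add: frobenius_map_def fun_eq_iff)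

definition frobenius_pairs :: "('a \<times> 'a) list" where
  "frobenius_pairs = map (\<lambda>(\<mu>, m). (m, contract (D.antipode' \<mu>))) dual_basis"

lemma frobenius_pairs_left: "(\<Sum>(x, y)\<leftarrow>frobenius_pairs. sc (T (mult y a)) x) = a"
proof -
  have "(\<Sum>(x, y)\<leftarrow>frobenius_pairs. sc (T (mult y a)) x) = (\<Sum>(\<mu>, m)\<leftarrow>dual_basis. sc (\<mu> a) m)"
    unfolding frobenius_pairs_def sum_list_map_pairs
    by (intro sum_list_map_cong) (auto simp: T_mult_contract dual_basis_in_dual)
  then show ?thesis by (simp add: dual_basis_expand)
qed

lemma frobenius_pairs_right: "(\<Sum>(x, y)\<leftarrow>frobenius_pairs. sc (T (mult a x)) y) = a"
proof (rule frobenius_map_inj, rule ext)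
  fix b
  have "frobenius_map (\<Sum>(x, y)\<leftarrow>frobenius_pairs. sc (T (mult a x)) y) b =
      (\<Sum>(\<mu>, m)\<leftarrow>dual_basis. T (mult a m) * frobenius_map (contract (D.antipode' \<mu>)) b)"
    unfolding frobenius_pairs_def sum_list_map_pairs frobenius_map_def
    by (simp add: lin_on_sum_pairs_scale[OF lin_functional_mult_left[OF T_in_dual[unfolded dual_carrier_iff]]])
  also have "\<dots> = (\<Sum>(\<mu>, m)\<leftarrow>dual_basis. frobenius_map a m * \<mu> b)"
    by (intro sum_list_map_cong) (auto simp: T_mult_contract dual_basis_in_dual frobenius_map_def)
  also have "\<dots> = frobenius_map a b" by (rule functional_expand[OF frobenius_map_in, symmetric])
  finally show "frobenius_map (\<Sum>(x, y)\<leftarrow>frobenius_pairs. sc (T (mult a x)) y) b = frobenius_map a b" .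
qed

lemma T_right_integral: "sweedler comult a (\<lambda>x y. sc (T x) y) = sc (T a) one"
proof (rule linear_functional_ext)
  fix g assume g: "lin_functional sc UNIV g"
  then have "g (sweedler comult a (\<lambda>x y. sc (T x) y)) = dmult T g a"
    using lin_on_sweedler_scale[of "\<lambda>r s. r * s" g comult a "\<lambda>x y. y" "\<lambda>x y. T x"]
    by (simp add: dual_mult_apply)
  also have "\<dots> = g (sc (T a) one)"
    using D.right_integral_mult[of g] g
    by (simp add: dual_carrier_iff dual_counit_def dual_scale_def lin_onD_scale mult.commute)
  finally show "g (sweedler comult a (\<lambda>x y. sc (T x) y)) = g (sc (T a) one)" .
qed simp_all

theorem fh_structure_from_dual: "fh_structure sc UNIV mult one comult counit T frobenius_pairs"
  using T_in_dual
  by unfold_locales (simp_all add: dual_carrier_iff frobenius_pairs_left frobenius_pairs_right T_right_integral)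

end

theorem mainTheorem17:
  fixes sc :: "'k::comm_ring_1 \<Rightarrow> 'h::ab_group_add \<Rightarrow> 'h"
    and mult :: "'h \<Rightarrow> 'h \<Rightarrow> 'h" and one :: 'h
    and comult :: "'h \<Rightarrow> ('h \<times> 'h) list" and counit :: "'h \<Rightarrow> 'k"
  assumes "bialgebra sc UNIV mult one comult counit"
    and "fin_gen_proj sc UNIV"
  shows "FH_algebra sc UNIV mult one comult counit \<longleftrightarrow>
         FH_algebra dual_scale (dual_carrier sc UNIV) (dual_mult UNIV comult) (dual_one UNIV counit)
                    (dual_comult sc UNIV mult) (dual_counit one)"
proof
  assume "FH_algebra sc UNIV mult one comult counit"
  then obtain f xys where "fh_structure sc UNIV mult one comult counit f xys"
    by (rule FH_algebra_imp_fh_structure)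
  then interpret fh_univ sc mult one comult counit f xys
    by (intro fh_univ.intro fgp_bialgebra_dual.intro fgp_bialgebraI[OF assms])
  show "FH_algebra dual_scale (dual_carrier sc UNIV) (dual_mult UNIV comult) (dual_one UNIV counit)
      (dual_comult sc UNIV mult) (dual_counit one)"
    by (rule FH_algebra_dual)
next
  assume "FH_algebra dual_scale (dual_carrier sc UNIV) (dual_mult UNIV comult) (dual_one UNIV counit)
      (dual_comult sc UNIV mult) (dual_counit one)"
  then obtain \<Phi> XY where "fh_structure dual_scale (dual_carrier sc UNIV) (dual_mult UNIV comult)
      (dual_one UNIV counit) (dual_comult sc UNIV mult) (dual_counit one) \<Phi> XY"
    by (rule FH_algebra_imp_fh_structure)
  then interpret dual_fh sc mult one comult counit \<Phi> XY
    by (intro dual_fh.intro fgp_bialgebra_dual.intro fgp_bialgebraI[OF assms])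
  show "FH_algebra sc UNIV mult one comult counit"
    by (rule fh_structure_imp_FH_algebra[OF fh_structure_from_dual assms])
qed

end
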